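(* For every word $x$ there exists at most one densely non-increasing sequence $(u_\beta)_{\beta<\alpha}$ of prime words such that $x=\prod_{\beta<\alpha}u_\beta$.
   Context: $A$ is a finite alphabet with a linear order $<_A$. Words are sequences of letters indexed by countable ordinals; $\prod$ is ordered concatenation and $x^\alpha$ the concatenation of $\alpha$ copies of $x$. A suffix of $x$ is $x[\gamma,|x|)$, proper if $0<\gamma<|x|$. Write $x<_{str}x'$ if there are letters $a<_Ab$ and words $y,z,z'$ with $x=yaz$, $x'=ybz'$; $x\le_{lex}x'$ iff $x$ is a prefix of $x'$ or $x<_{str}x'$. A word is primitive if $x=y^\alpha$ implies $\alpha=1$ and $y=x$; $w$ is prime if it is primitive and every proper suffix $z$ satisfies $w\le_{lex}z$. A sequence $(u_\beta)_{\beta<\alpha}$ of words is densely non-increasing if for all $\gamma<\gamma'\le\alpha$, either $u_\beta=u_\gamma$ for all $\gamma\le\beta<\gamma'$, or there exist $\gamma\le\beta<\beta'<\gamma'$ with $u_\beta>_{lex}u_{\beta'}$. *)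

theory Defs
  imports Main "HOL-Library.Countable_Set"
begin

text \<open>Transfinite words: a word is a pair (r, f) where r is a (reflexive) well-order
  relation on its field (the set of positions) and f assigns letters to positions.
  Words are considered equal up to letter-preserving order isomorphism.\<close>

type_synonym ('i,'a) wd = "'i rel \<times> ('i \<Rightarrow> 'a)"

definition wf_word :: "('i,'a) wd \<Rightarrow> bool" where
  "wf_word x \<longleftrightarrow> Well_order (fst x) \<and> countable (Field (fst x))"

definition weq :: "('i,'a) wd \<Rightarrow> ('j,'a) wd \<Rightarrow> bool" where
  "weq x y \<longleftrightarrow> (\<exists>h. bij_betw h (Field (fst x)) (Field (fst y))
     \<and> (\<forall>p\<in>Field (fst x). \<forall>q\<in>Field (fst x). (p,q) \<in> fst x \<longleftrightarrow> (h p, h q) \<in> fst y)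
     \<and> (\<forall>p\<in>Field (fst x). snd x p = snd y (h p)))"

definition cat :: "('i,'a) wd \<Rightarrow> ('j,'a) wd \<Rightarrow> ('i + 'j,'a) wd" where
  "cat x y = ({(Inl p, Inl q) | p q. (p,q) \<in> fst x}
            \<union> {(Inr p, Inr q) | p q. (p,q) \<in> fst y}
            \<union> {(Inl p, Inr q) | p q. p \<in> Field (fst x) \<and> q \<in> Field (fst y)},
            case_sum (snd x) (snd y))"

definition letter :: "'a \<Rightarrow> (nat,'a) wd" where
  "letter a = ({(0,0)}, \<lambda>_. a)"

definition wprod :: "'j rel \<Rightarrow> ('j \<Rightarrow> ('k,'a) wd) \<Rightarrow> ('j \<times> 'k,'a) wd" where
  "wprod s u = ({((b,p),(b',p')). b \<in> Field s \<and> b' \<in> Field s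
                  \<and> p \<in> Field (fst (u b)) \<and> p' \<in> Field (fst (u b'))
                  \<and> ((b \<noteq> b' \<and> (b,b') \<in> s) \<or> (b = b' \<and> (p,p') \<in> fst (u b)))},
                \<lambda>(b,p). snd (u b) p)"

definition lt_str :: "('i,'a::linorder) wd \<Rightarrow> ('j,'a) wd \<Rightarrow> bool" where
  "lt_str x x' \<longleftrightarrow> (\<exists>a b (y::(nat,'a) wd) (z::(nat,'a) wd) (z'::(nat,'a) wd).
      wf_word y \<and> wf_word z \<and> wf_word z' \<and> a < b
      \<and> weq x (cat y (cat (letter a) z)) \<and> weq x' (cat y (cat (letter b) z')))"

definition is_prefix :: "('i,'a) wd \<Rightarrow> ('j,'a) wd \<Rightarrow> bool" where
  "is_prefix x x' \<longleftrightarrow> (\<exists>z::(nat,'a) wd. wf_word z \<and> weq x' (cat x z))"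

definition le_lex :: "('i,'a::linorder) wd \<Rightarrow> ('j,'a) wd \<Rightarrow> bool" where
  "le_lex x x' \<longleftrightarrow> is_prefix x x' \<or> lt_str x x'"

definition lt_lex :: "('i,'a::linorder) wd \<Rightarrow> ('j,'a) wd \<Rightarrow> bool" where
  "lt_lex x x' \<longleftrightarrow> le_lex x x' \<and> \<not> weq x x'"

definition proper_suffix :: "('i,'a) wd \<Rightarrow> ('j,'a) wd \<Rightarrow> bool" where
  "proper_suffix z w \<longleftrightarrow> (\<exists>y::(nat,'a) wd. wf_word y \<and> Field (fst y) \<noteq> {}
      \<and> Field (fst z) \<noteq> {} \<and> weq w (cat y z))"

text \<open>x = y^alpha implies alpha = 1 and y = x (alpha a countable ordinal,
  represented as a well-order on a subset of nat).\<close>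
definition primitive :: "('i,'a) wd \<Rightarrow> bool" where
  "primitive x \<longleftrightarrow> (\<forall>(s::nat rel) (y::(nat,'a) wd).
      Well_order s \<and> wf_word y \<and> weq x (wprod s (\<lambda>_. y))
      \<longrightarrow> (\<exists>b. Field s = {b}) \<and> weq y x)"

definition prime_word :: "('i,'a::linorder) wd \<Rightarrow> bool" where
  "prime_word w \<longleftrightarrow> wf_word w \<and> primitive w
     \<and> (\<forall>z::(nat,'a) wd. wf_word z \<and> proper_suffix z w \<longrightarrow> le_lex w z)"

text \<open>Densely non-increasing: for all gamma < gamma' <= alpha (gamma' = None encodes alpha).\<close>
definition below_bound :: "'j rel \<Rightarrow> 'j option \<Rightarrow> 'j \<Rightarrow> bool" where
  "below_bound s g' b = (case g' of None \<Rightarrow> True | Some g \<Rightarrow> (b, g) \<in> s \<and> b \<noteq> g)"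

definition dense_nonincr :: "'j rel \<Rightarrow> ('j \<Rightarrow> ('k,'a::linorder) wd) \<Rightarrow> bool" where
  "dense_nonincr s u \<longleftrightarrow> (\<forall>g \<in> Field s. \<forall>g' :: 'j option.
      (case g' of None \<Rightarrow> True | Some h \<Rightarrow> h \<in> Field s \<and> (g, h) \<in> s \<and> g \<noteq> h) \<longrightarrow>
      ((\<forall>b \<in> Field s. (g, b) \<in> s \<and> below_bound s g' b \<longrightarrow> weq (u b) (u g))
       \<or> (\<exists>b \<in> Field s. \<exists>b' \<in> Field s. (g, b) \<in> s \<and> (b, b') \<in> s \<and> b \<noteq> b'
            \<and> below_bound s g' b' \<and> lt_lex (u b') (u b))))"

end

theory Submission
  imports Defs
begin

text \<open>The argument is the transfinite version of the classical uniqueness proof for Lyndon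
  factorizations. The key fact is that in a densely non-increasing factorization
  \<open>x = \<Prod>\<^sub>\<beta> u\<^sub>\<beta>\<close> into prime words no prime word can start with a factor
  \<open>u\<^sub>\<sigma>\<close> and be a strictly longer prefix of the suffix of \<open>x\<close> beginning there. Granting this,
  two such factorizations must begin their factors at the same positions: at the first position
  where they disagree, one factor would be a prime prefix of the suffix properly extending the other
  factor. Hence the two index orders are isomorphic and corresponding factors are equal.

  The key fact is proved by well-founded induction on the order type of prime words, with the
  invariant that a prime \<open>p\<close> properly extending \<open>u\<^sub>\<sigma>\<close> dominates every prefix of the
  suffix starting at \<open>u\<^sub>\<sigma>\<close>. If some prefix exceeded \<open>p\<close>, the first difference would lie
  in a later block; removing from \<open>p\<close> the part matching the blocks before a block \<open>\<gamma>\<close>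
  leaves a proper suffix, which dominates \<open>p\<close> by primality. Density makes the first factor
  \<open>u\<^sub>\<delta>\<close> that differs from \<open>u\<^sub>\<sigma>\<close> lexicographically smaller, and comparing the suffix of
  \<open>p\<close> at \<open>\<delta>\<close> with \<open>u\<^sub>\<delta>\<close> (using the invariant for the shorter word \<open>u\<^sub>\<sigma>\<close>) shows it is
  below \<open>p\<close>, a contradiction.\<close>

abbreviation fld :: "('i,'a) wd \<Rightarrow> 'i set" where "fld x \<equiv> Field (fst x)"

abbreviation WO :: "('i,'a) wd \<Rightarrow> bool" where "WO x \<equiv> Well_order (fst x)"

definition word_iso :: "('i,'a) wd \<Rightarrow> ('j,'a) wd \<Rightarrow> ('i \<Rightarrow> 'j) \<Rightarrow> bool" where
 "word_iso x y h \<longleftrightarrow> bij_betw h (fld x) (fld y)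
     \<and> (\<forall>p\<in>fld x. \<forall>q\<in>fld x. (p,q) \<in> fst x \<longleftrightarrow> (h p, h q) \<in> fst y)
     \<and> (\<forall>p\<in>fld x. snd x p = snd y (h p))"

lemma weq_iff_word_iso: "weq x y \<longleftrightarrow> (\<exists>h. word_iso x y h)"
  unfolding weq_def word_iso_def by simp

lemma word_isoI: "bij_betw h (fld x) (fld y) \<Longrightarrow>
   (\<And>p q. p \<in> fld x \<Longrightarrow> q \<in> fld x \<Longrightarrow> (p,q) \<in> fst x \<longleftrightarrow> (h p, h q) \<in> fst y) \<Longrightarrow>
   (\<And>p. p \<in> fld x \<Longrightarrow> snd x p = snd y (h p)) \<Longrightarrow> word_iso x y h"
  unfolding word_iso_def by blast

lemma word_iso_bij: "word_iso x y h \<Longrightarrow> bij_betw h (fld x) (fld y)"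
  unfolding word_iso_def by blast

lemma word_iso_rel:
  "word_iso x y h \<Longrightarrow> p \<in> fld x \<Longrightarrow> q \<in> fld x \<Longrightarrow> (p,q) \<in> fst x \<longleftrightarrow> (h p, h q) \<in> fst y"
  unfolding word_iso_def by blast

lemma word_iso_snd: "word_iso x y h \<Longrightarrow> p \<in> fld x \<Longrightarrow> snd x p = snd y (h p)"
  unfolding word_iso_def by blast

lemma word_iso_in: "word_iso x y h \<Longrightarrow> p \<in> fld x \<Longrightarrow> h p \<in> fld y"
  using word_iso_bij bij_betwE by blast

lemma word_iso_id: "word_iso x x id"
  unfolding word_iso_def by (simp add: bij_betw_id)

lemma word_iso_inv: assumes h: "word_iso x y h" shows "word_iso y x (inv_into (fld x) h)"
proof -
  let ?g = "inv_into (fld x) h"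
  have b: "bij_betw h (fld x) (fld y)" using h by (rule word_iso_bij)
  have bg: "bij_betw ?g (fld y) (fld x)" using b by (rule bij_betw_inv_into)
  have hg: "\<And>q. q \<in> fld y \<Longrightarrow> h (?g q) = q" using b by (rule bij_betw_inv_into_right)
  have gin: "\<And>q. q \<in> fld y \<Longrightarrow> ?g q \<in> fld x" using bg bij_betwE by blast
  show ?thesis
  proof (rule word_isoI[OF bg])
    fix p q assume "p \<in> fld y" "q \<in> fld y"
    then show "(p, q) \<in> fst y \<longleftrightarrow> (?g p, ?g q) \<in> fst x"
      using word_iso_rel[OF h gin gin] hg by metis
  next
    fix p assume "p \<in> fld y"
    then show "snd y p = snd x (?g p)" using word_iso_snd[OF h gin] hg by metis
  qed
qed

lemma word_iso_comp: assumes h: "word_iso x y h" and k: "word_iso y z k" shows "word_iso x z (k \<circ> h)"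
proof (rule word_isoI)
  show "bij_betw (k \<circ> h) (fld x) (fld z)" using word_iso_bij[OF h] word_iso_bij[OF k] by (rule bij_betw_trans)
next
  fix p q assume p: "p \<in> fld x" and q: "q \<in> fld x"
  show "(p, q) \<in> fst x \<longleftrightarrow> ((k \<circ> h) p, (k \<circ> h) q) \<in> fst z"
    using word_iso_rel[OF h p q] word_iso_rel[OF k word_iso_in[OF h p] word_iso_in[OF h q]] by simp
next
  fix p assume p: "p \<in> fld x"
  show "snd x p = snd z ((k \<circ> h) p)" using word_iso_snd[OF h p] word_iso_snd[OF k word_iso_in[OF h p]] by simp
qed

lemma weq_refl: "weq x x"
  using word_iso_id weq_iff_word_iso by blast

lemma weq_sym: "weq x y \<Longrightarrow> weq y x"
  by (metis word_iso_inv weq_iff_word_iso)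

lemma weq_trans: "weq x y \<Longrightarrow> weq y z \<Longrightarrow> weq x z"
  by (metis word_iso_comp weq_iff_word_iso)

lemma Well_order_Refl: "Well_order r \<Longrightarrow> Refl r"
  using wo_rel.REFL wo_rel_def by blast

lemma Well_order_refl: "Well_order r \<Longrightarrow> p \<in> Field r \<Longrightarrow> (p,p) \<in> r"
  using Well_order_Refl refl_onD by fastforce

lemma Well_order_total: "Well_order r \<Longrightarrow> p \<in> Field r \<Longrightarrow> q \<in> Field r \<Longrightarrow> (p,q) \<in> r \<or> (q,p) \<in> r"
  using Well_order_refl by (metis wo_rel.TOTALS wo_rel_def)

lemma Well_order_antisym: "Well_order r \<Longrightarrow> (p,q) \<in> r \<Longrightarrow> (q,p) \<in> r \<Longrightarrow> p = q"
  by (metis wo_rel.ANTISYM wo_rel_def antisymD)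

lemma Well_order_trans: "Well_order r \<Longrightarrow> (p,q) \<in> r \<Longrightarrow> (q,t) \<in> r \<Longrightarrow> (p,t) \<in> r"
  by (metis wo_rel.TRANS wo_rel_def transD)

lemma Well_order_least:
  assumes "Well_order r" "B \<subseteq> Field r" "B \<noteq> {}"
  shows "\<exists>m\<in>B. \<forall>b\<in>B. (m,b) \<in> r"
  using wo_rel.minim_in wo_rel.minim_least assms wo_rel_def by metis

lemma Field_Restr_refl: "Refl r \<Longrightarrow> A \<subseteq> Field r \<Longrightarrow> Field (Restr r A) = A"
  unfolding refl_on_def Field_def by blast

lemma ofilter_down: "ofilter r A \<Longrightarrow> a \<in> A \<Longrightarrow> (b,a) \<in> r \<Longrightarrow> b \<in> A"
  unfolding Order_Relation.ofilter_def under_def by blast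

lemma ofilter_sub: "ofilter r A \<Longrightarrow> A \<subseteq> Field r"
  unfolding Order_Relation.ofilter_def by blast

lemma ofilterI: "A \<subseteq> Field r \<Longrightarrow> (\<And>a b. a \<in> A \<Longrightarrow> (b,a) \<in> r \<Longrightarrow> b \<in> A) \<Longrightarrow> ofilter r A"
  unfolding Order_Relation.ofilter_def under_def by blast

lemma ofilter_Int: "ofilter r I \<Longrightarrow> ofilter r I' \<Longrightarrow> ofilter r (I \<inter> I')"
  unfolding Order_Relation.ofilter_def by blast

lemma ofilter_linear: "Well_order r \<Longrightarrow> ofilter r A \<Longrightarrow> ofilter r B \<Longrightarrow> A \<subseteq> B \<or> B \<subseteq> A"
  using wo_rel.ofilter_linord wo_rel_def by blast

definition restr :: "('i,'a) wd \<Rightarrow> 'i set \<Rightarrow> ('i,'a) wd" where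
  "restr x A = (Restr (fst x) A, snd x)"

lemma fst_restr[simp]: "fst (restr x A) = Restr (fst x) A"
  and snd_restr[simp]: "snd (restr x A) = snd x"
  by (auto simp: restr_def)

lemma restr_restr: "restr (restr x A) B = restr x (A \<inter> B)"
  by (auto simp: restr_def)

lemma restr_restr_subset: "P \<subseteq> S \<Longrightarrow> restr (restr x S) P = restr x P"
  by (simp add: restr_restr Int_absorb1)

lemma restr_fld[simp]: "restr x (fld x) = x"
  by (simp add: restr_def Restr_Field)

lemma fld_restr: "WO x \<Longrightarrow> A \<subseteq> fld x \<Longrightarrow> fld (restr x A) = A"
  by (metis Field_Restr_refl Well_order_Refl fst_restr)

lemma restr_restr_diff:
  assumes "WO x" "S \<subseteq> fld x" shows "restr (restr x S) (fld (restr x S) - P) = restr x (S - P)"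
proof -
  have "S \<inter> (S - P) = S - P" by blast
  then show ?thesis using fld_restr[OF assms] by (simp add: restr_restr)
qed

lemma WO_restr: "WO x \<Longrightarrow> WO (restr x A)"
  by (simp add: Well_order_Restr)

lemma wf_word_restr: assumes "wf_word x" shows "wf_word (restr x A)"
proof -
  have "Field (Restr (fst x) A) \<subseteq> fld x" by (auto simp: Field_def)
  then show ?thesis using assms countable_subset Well_order_Restr unfolding wf_word_def by auto
qed

lemma word_iso_restr: assumes wx: "WO x" and wy: "WO y" and h: "word_iso x y h" and A: "A \<subseteq> fld x"
  shows "word_iso (restr x A) (restr y (h ` A)) h"
proof (rule word_isoI)
  have "bij_betw h A (h ` A)" using word_iso_bij[OF h] A bij_betw_subset by blast
  moreover have "h ` A \<subseteq> fld y" using word_iso_in[OF h] A by blast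
  ultimately show "bij_betw h (fld (restr x A)) (fld (restr y (h ` A)))"
    using fld_restr[OF wx A] fld_restr[OF wy] by simp
next
  fix p q assume "p \<in> fld (restr x A)" "q \<in> fld (restr x A)"
  then show "(p, q) \<in> fst (restr x A) \<longleftrightarrow> (h p, h q) \<in> fst (restr y (h ` A))"
    using word_iso_rel[OF h] fld_restr[OF wx A] A by auto
next
  fix p assume "p \<in> fld (restr x A)"
  then show "snd (restr x A) p = snd (restr y (h ` A)) (h p)"
    using word_iso_snd[OF h] fld_restr[OF wx A] A by auto
qed

lemma fld_cat: "fld (cat y z) = Inl ` fld y \<union> Inr ` fld z"
  unfolding cat_def Field_def by force

lemma cat_rel: "((a,b) \<in> fst (cat y z)) \<longleftrightarrow>
  (\<exists>p q. a = Inl p \<and> b = Inl q \<and> (p,q) \<in> fst y) \<or>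
  (\<exists>p q. a = Inr p \<and> b = Inr q \<and> (p,q) \<in> fst z) \<or>
  (\<exists>p q. a = Inl p \<and> b = Inr q \<and> p \<in> fld y \<and> q \<in> fld z)"
  unfolding cat_def by auto

lemma snd_cat: "snd (cat y z) = case_sum (snd y) (snd z)"
  by (simp add: cat_def)

lemma word_iso_onto_part:
  assumes wx: "WO x" and h: "word_iso x w h" and A: "A \<subseteq> fld x"
    and k: "bij_betw k (h ` A) (fld y)"
    and rel: "\<And>p q. p \<in> A \<Longrightarrow> q \<in> A \<Longrightarrow> (h p, h q) \<in> fst w \<longleftrightarrow> (k (h p), k (h q)) \<in> fst y"
    and lt: "\<And>p. p \<in> A \<Longrightarrow> snd w (h p) = snd y (k (h p))"
  shows "word_iso (restr x A) y (k \<circ> h)"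
proof (rule word_isoI)
  have "bij_betw h A (h ` A)" using word_iso_bij[OF h] A bij_betw_subset by blast
  then show "bij_betw (k \<circ> h) (fld (restr x A)) (fld y)"
    using bij_betw_trans[OF _ k] fld_restr[OF wx A] by simp
next
  fix p q assume "p \<in> fld (restr x A)" "q \<in> fld (restr x A)"
  then have pq: "p \<in> A" "q \<in> A" using fld_restr[OF wx A] by auto
  then have "(p, q) \<in> fst x \<longleftrightarrow> (k (h p), k (h q)) \<in> fst y"
    using word_iso_rel[OF h, of p q] rel[of p q] A by auto
  then show "(p, q) \<in> fst (restr x A) \<longleftrightarrow> ((k \<circ> h) p, (k \<circ> h) q) \<in> fst y"
    using pq by auto
next
  fix p assume "p \<in> fld (restr x A)"
  then show "snd (restr x A) p = snd y ((k \<circ> h) p)"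
    using word_iso_snd[OF h, of p] lt[of p] fld_restr[OF wx A] A by auto
qed

lemma cat_decomp:
  assumes wx: "WO x" and h: "word_iso x (cat y z) h"
  shows "ofilter (fst x) {d \<in> fld x. isl (h d)}"
    and "word_iso (restr x {d \<in> fld x. isl (h d)}) y (projl \<circ> h)"
    and "word_iso (restr x (fld x - {d \<in> fld x. isl (h d)})) z (projr \<circ> h)"
proof -
  let ?A = "{d \<in> fld x. isl (h d)}"
  have hx: "h ` fld x = Inl ` fld y \<union> Inr ` fld z"
    using word_iso_bij[OF h] by (simp add: bij_betw_def fld_cat)
  have "h ` ?A = {c \<in> h ` fld x. isl c}" by blast
  also have "\<dots> = Inl ` fld y" unfolding hx by auto
  finally have hA: "h ` ?A = Inl ` fld y" .
  have "h ` (fld x - ?A) = {c \<in> h ` fld x. \<not> isl c}" by blast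
  also have "\<dots> = Inr ` fld z" unfolding hx by auto
  finally have hB: "h ` (fld x - ?A) = Inr ` fld z" .
  show "ofilter (fst x) ?A"
  proof (rule ofilterI)
    fix a c assume a: "a \<in> ?A" and ca: "(c,a) \<in> fst x"
    have c: "c \<in> fld x" using ca by (simp add: FieldI1)
    then have "(h c, h a) \<in> fst (cat y z)" using word_iso_rel[OF h c] a ca by blast
    then show "c \<in> ?A" using a c unfolding cat_rel by auto
  qed blast
  show "word_iso (restr x ?A) y (projl \<circ> h)"
  proof (rule word_iso_onto_part[OF wx h])
    show "bij_betw projl (h ` ?A) (fld y)"
      unfolding hA by (rule bij_betw_byWitness[where f' = Inl]) auto
  next
    fix p q assume "p \<in> ?A" "q \<in> ?A"
    then obtain a b where "h p = Inl a" "h q = Inl b" by (metis (mono_tags) mem_Collect_eq sum.collapse(1))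
    then show "(h p, h q) \<in> fst (cat y z) \<longleftrightarrow> (projl (h p), projl (h q)) \<in> fst y"
      by (simp add: cat_rel)
  next
    fix p assume "p \<in> ?A"
    then obtain a where "h p = Inl a" by (metis (mono_tags) mem_Collect_eq sum.collapse(1))
    then show "snd (cat y z) (h p) = snd y (projl (h p))" by (simp add: snd_cat)
  qed blast
  show "word_iso (restr x (fld x - ?A)) z (projr \<circ> h)"
  proof (rule word_iso_onto_part[OF wx h])
    show "bij_betw projr (h ` (fld x - ?A)) (fld z)"
      unfolding hB by (rule bij_betw_byWitness[where f' = Inr]) auto
  next
    fix p q assume "p \<in> fld x - ?A" "q \<in> fld x - ?A"
    then obtain a b where "h p = Inr a" "h q = Inr b" by (metis (mono_tags) DiffE mem_Collect_eq sum.collapse(2) isl_def)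
    then show "(h p, h q) \<in> fst (cat y z) \<longleftrightarrow> (projr (h p), projr (h q)) \<in> fst z"
      by (simp add: cat_rel)
  next
    fix p assume "p \<in> fld x - ?A"
    then obtain a where "h p = Inr a" by (metis (mono_tags) DiffE mem_Collect_eq sum.collapse(2) isl_def)
    then show "snd (cat y z) (h p) = snd z (projr (h p))" by (simp add: snd_cat)
  qed blast
qed

lemma bij_betw_Inl_Inr:
  assumes g1: "bij_betw g1 A Y" and g2: "bij_betw g2 B Z" and AB: "A \<inter> B = {}"
  shows "bij_betw (\<lambda>d. if d \<in> A then Inl (g1 d) else Inr (g2 d)) (A \<union> B) (Inl ` Y \<union> Inr ` Z)"
proof (rule bij_betw_combine)
  have "bij_betw (Inl \<circ> g1) A (Inl ` Y)"
    using bij_betw_trans[OF g1, of Inl] by (simp add: bij_betw_def inj_on_def)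
  then show "bij_betw (\<lambda>d. if d \<in> A then Inl (g1 d) else Inr (g2 d)) A (Inl ` Y)"
    by (rule bij_betw_cong[THEN iffD1, rotated]) simp
  have "bij_betw (Inr \<circ> g2) B (Inr ` Z)"
    using bij_betw_trans[OF g2, of Inr] by (simp add: bij_betw_def inj_on_def)
  then show "bij_betw (\<lambda>d. if d \<in> A then Inl (g1 d) else Inr (g2 d)) B (Inr ` Z)"
    by (rule bij_betw_cong[THEN iffD1, rotated]) (use AB in auto)
qed auto

lemma cat_compose:
  assumes wo: "WO x" and A: "ofilter (fst x) A"
    and g1: "word_iso (restr x A) y g1" and g2: "word_iso (restr x (fld x - A)) z g2"
  shows "word_iso x (cat y z) (\<lambda>d. if d \<in> A then Inl (g1 d) else Inr (g2 d))"
proof -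
  let ?h = "\<lambda>d. if d \<in> A then Inl (g1 d) else Inr (g2 d)"
  have Asub: "A \<subseteq> fld x" using A by (rule ofilter_sub)
  have fA: "fld (restr x A) = A" using fld_restr[OF wo Asub] .
  have fB: "fld (restr x (fld x - A)) = fld x - A" using fld_restr[OF wo, of "fld x - A"] by simp
  have b1: "bij_betw g1 A (fld y)" using word_iso_bij[OF g1] fA by simp
  have b2: "bij_betw g2 (fld x - A) (fld z)" using word_iso_bij[OF g2] fB by simp
  have b: "bij_betw ?h (A \<union> (fld x - A)) (Inl ` fld y \<union> Inr ` fld z)"
    using bij_betw_Inl_Inr[OF b1 b2] by blast
  have g1in: "\<And>p. p \<in> A \<Longrightarrow> g1 p \<in> fld y" using b1 bij_betwE by blast
  have g2in: "\<And>p. p \<in> fld x - A \<Longrightarrow> g2 p \<in> fld z" using b2 bij_betwE by blast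
  show ?thesis
  proof (rule word_isoI)
    have "A \<union> (fld x - A) = fld x" using Asub by blast
    then show "bij_betw ?h (fld x) (fld (cat y z))" using b by (simp add: fld_cat)
  next
    fix p q assume p: "p \<in> fld x" and q: "q \<in> fld x"
    show "(p, q) \<in> fst x \<longleftrightarrow> (?h p, ?h q) \<in> fst (cat y z)"
    proof (cases "p \<in> A"; cases "q \<in> A")
      assume pA: "p \<in> A" and qA: "q \<in> A"
      have "(p,q) \<in> fst (restr x A) \<longleftrightarrow> (g1 p, g1 q) \<in> fst y" using word_iso_rel[OF g1] pA qA fA by blast
      then show ?thesis using pA qA by (simp add: cat_rel)
    next
      assume pA: "p \<in> A" and qA: "q \<notin> A"
      have "(p,q) \<in> fst x"
      proof -
        have "(p,q) \<in> fst x \<or> (q,p) \<in> fst x" using Well_order_total[OF wo p q] .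
        then show ?thesis using ofilter_down[OF A pA] qA by blast
      qed
      then show ?thesis using pA qA g1in[OF pA] g2in q by (simp add: cat_rel)
    next
      assume pA: "p \<notin> A" and qA: "q \<in> A"
      have "(p,q) \<notin> fst x" using ofilter_down[OF A qA] pA by blast
      then show ?thesis using pA qA by (simp add: cat_rel)
    next
      assume pA: "p \<notin> A" and qA: "q \<notin> A"
      have "(p,q) \<in> fst (restr x (fld x - A)) \<longleftrightarrow> (g2 p, g2 q) \<in> fst z" using word_iso_rel[OF g2] pA qA p q fB by blast
      then show ?thesis using pA qA p q by (simp add: cat_rel)
    qed
  next
    fix p assume p: "p \<in> fld x"
    show "snd x p = snd (cat y z) (?h p)"
    proof (cases "p \<in> A")
      case True
      then show ?thesis using word_iso_snd[OF g1] fA by (simp add: snd_cat)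
    next
      case False
      then show ?thesis using word_iso_snd[OF g2] fB p by (simp add: snd_cat)
    qed
  qed
qed

lemma fld_letter: "fld (letter a) = {0}" unfolding letter_def by (simp add: Field_def)

lemma word_iso_letterD:
  assumes h: "word_iso w (letter a) h"
  shows "\<exists>p. fld w = {p} \<and> snd w p = a"
proof -
  have b: "bij_betw h (fld w) {0}" using word_iso_bij[OF h] fld_letter by metis
  then have "0 \<in> h ` fld w" by (simp add: bij_betw_def)
  then obtain p where p: "p \<in> fld w" "h p = 0" by (metis imageE)
  have "fld w = {p}"
  proof
    show "fld w \<subseteq> {p}"
    proof
      fix q assume q: "q \<in> fld w"
      then have "h q = 0" using b bij_betwE by blast
      then have "h q = h p" using p by simp
      then show "q \<in> {p}" using b p q by (simp add: bij_betw_def inj_on_def)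
    qed
  qed (use p in blast)
  moreover have "snd w p = a" using word_iso_snd[OF h p(1)] by (simp add: letter_def)
  ultimately show ?thesis by blast
qed

lemma word_iso_letterI: assumes wo: "WO w" and f: "fld w = {p}"
  shows "word_iso w (letter (snd w p)) (\<lambda>_. 0)"
proof (rule word_isoI)
  have "fld (letter (snd w p)) = {0}" by (rule fld_letter)
  then show "bij_betw (\<lambda>_. 0) (fld w) (fld (letter (snd w p)))" using f
    by (simp add: bij_betw_def)
next
  fix p1 q1 assume "p1 \<in> fld w" "q1 \<in> fld w"
  then have "p1 = p" "q1 = p" using f by auto
  moreover have "(p,p) \<in> fst w" using Well_order_refl[OF wo] f by blast
  ultimately show "(p1, q1) \<in> fst w \<longleftrightarrow> (0::nat, 0::nat) \<in> fst (letter (snd w p))"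
    by (simp add: letter_def)
next
  fix p1 assume "p1 \<in> fld w"
  then show "snd w p1 = snd (letter (snd w p)) 0" using f by (simp add: letter_def)
qed

text \<open>\<open>prefix_of\<close> and \<open>str_less\<close> restate \<open>is_prefix\<close> and \<open>lt_str\<close> with order filters, which
  makes them meaningful for words over arbitrary position types; on well-formed words they agree
  (\<open>le_lex_iff_prefix_of_or_str_less\<close>).\<close>
definition prefix_of :: "('i,'a) wd \<Rightarrow> ('j,'a) wd \<Rightarrow> bool" where
  "prefix_of x y \<longleftrightarrow> (\<exists>B. ofilter (fst y) B \<and> weq x (restr y B))"

definition least_outside :: "'i rel \<Rightarrow> 'i set \<Rightarrow> 'i \<Rightarrow> bool" where
  "least_outside r A a \<longleftrightarrow> a \<in> Field r \<and> a \<notin> A \<and> (\<forall>c\<in>Field r. c \<notin> A \<longrightarrow> (a,c) \<in> r)"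

definition str_less :: "('i,'a::linorder) wd \<Rightarrow> ('j,'a) wd \<Rightarrow> bool" where
  "str_less x y \<longleftrightarrow> (\<exists>A B a b. ofilter (fst x) A \<and> ofilter (fst y) B \<and> weq (restr x A) (restr y B)
        \<and> least_outside (fst x) A a \<and> least_outside (fst y) B b \<and> snd x a < snd y b)"

lemma prefix_ofI: "ofilter (fst y) B \<Longrightarrow> weq x (restr y B) \<Longrightarrow> prefix_of x y"
  unfolding prefix_of_def by blast

lemma str_lessI:
  "ofilter (fst x) A \<Longrightarrow> ofilter (fst y) B \<Longrightarrow> weq (restr x A) (restr y B)
   \<Longrightarrow> least_outside (fst x) A a \<Longrightarrow> least_outside (fst y) B b \<Longrightarrow> snd x a < snd y b \<Longrightarrow> str_less x y"
  unfolding str_less_def by blast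

lemma is_prefix_imp_prefix_of:
  fixes x :: "('i,'a) wd" and y :: "('j,'a) wd"
  assumes wo: "WO y" and ip: "is_prefix x y"
  shows "prefix_of x y"
proof -
  obtain z :: "(nat,'a) wd" where "wf_word z" "weq y (cat x z)" using ip unfolding is_prefix_def by blast
  then obtain h where h: "word_iso y (cat x z) h" using weq_iff_word_iso by blast
  define B where "B = {d \<in> fld y. isl (h d)}"
  have "ofilter (fst y) B" using cat_decomp(1)[OF wo h] B_def by simp
  moreover have "word_iso (restr y B) x (projl \<circ> h)" using cat_decomp(2)[OF wo h] B_def by simp
  then have "weq x (restr y B)" using weq_iff_word_iso weq_sym by blast
  ultimately show ?thesis unfolding prefix_of_def by blast
qed

lemma prefix_of_imp_is_prefix:
  fixes x :: "('i,'a) wd" and y :: "(nat,'a) wd"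
  assumes wf: "wf_word y" and p: "prefix_of x y"
  shows "is_prefix x y"
proof -
  have wo: "WO y" using wf unfolding wf_word_def by blast
  obtain B where B: "ofilter (fst y) B" "weq x (restr y B)" using p unfolding prefix_of_def by blast
  obtain g where g: "word_iso (restr y B) x g" using B(2) weq_sym weq_iff_word_iso by blast
  have "word_iso (restr y (fld y - B)) (restr y (fld y - B)) id" by (rule word_iso_id)
  from cat_compose[OF wo B(1) g this]
  have "weq y (cat x (restr y (fld y - B)))" using weq_iff_word_iso by blast
  moreover have "wf_word (restr y (fld y - B))" using wf_word_restr wf by blast
  ultimately show ?thesis unfolding is_prefix_def by blast
qed

lemma least_outside_iff_ofilter_singleton:
  assumes wo: "WO x"
  shows "least_outside (fst x) A a \<longleftrightarrow> ofilter (fst (restr x (fld x - A))) {a}"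
proof -
  have fld: "fld (restr x (fld x - A)) = fld x - A" using fld_restr[OF wo, of "fld x - A"] by blast
  show ?thesis
  proof
    assume m: "least_outside (fst x) A a"
    show "ofilter (fst (restr x (fld x - A))) {a}"
    proof (rule ofilterI)
      fix a' b assume "a' \<in> {a}" "(b,a') \<in> fst (restr x (fld x - A))"
      then have "(b,a) \<in> fst x" "(a,b) \<in> fst x" using m unfolding least_outside_def by auto
      then show "b \<in> {a}" using Well_order_antisym[OF wo] by blast
    qed (use m fld in \<open>auto simp: least_outside_def\<close>)
  next
    assume a: "ofilter (fst (restr x (fld x - A))) {a}"
    then have ax: "a \<in> fld x" "a \<notin> A" using ofilter_sub[OF a] fld by auto
    have "(a,c) \<in> fst x" if "c \<in> fld x" "c \<notin> A" for c
    proof (cases "(c,a) \<in> fst x")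
      case True
      then have "c = a" using ofilter_down[OF a, of a c] ax that by auto
      then show ?thesis using Well_order_refl[OF wo ax(1)] by simp
    qed (use Well_order_total[OF wo ax(1) that(1)] in blast)
    then show "least_outside (fst x) A a" unfolding least_outside_def using ax by blast
  qed
qed

lemma weq_cat_letterD:
  assumes wo: "WO x" and e: "weq x (cat y0 (cat (letter c) z))"
  shows "\<exists>A a. ofilter (fst x) A \<and> weq (restr x A) y0 \<and> least_outside (fst x) A a \<and> snd x a = c"
proof -
  obtain h where h: "word_iso x (cat y0 (cat (letter c) z)) h" using e weq_iff_word_iso by blast
  define A where "A = {d \<in> fld x. isl (h d)}"
  have A: "ofilter (fst x) A" using cat_decomp(1)[OF wo h] A_def by simp
  have i1: "word_iso (restr x A) y0 (projl \<circ> h)" using cat_decomp(2)[OF wo h] A_def by simp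
  define x2 where "x2 = restr x (fld x - A)"
  have i2: "word_iso x2 (cat (letter c) z) (projr \<circ> h)" using cat_decomp(3)[OF wo h] A_def x2_def by simp
  have wo2: "WO x2" using WO_restr[OF wo] x2_def by simp
  define A2 where "A2 = {d \<in> fld x2. isl ((projr \<circ> h) d)}"
  have A2: "ofilter (fst x2) A2" using cat_decomp(1)[OF wo2 i2] A2_def by simp
  have i3: "word_iso (restr x2 A2) (letter c) (projl \<circ> (projr \<circ> h))" using cat_decomp(2)[OF wo2 i2] A2_def by simp
  obtain p where p: "fld (restr x2 A2) = {p}" "snd (restr x2 A2) p = c" using word_iso_letterD[OF i3] by blast
  have A2sub: "A2 \<subseteq> fld x2" using A2 ofilter_sub by blast
  have "fld (restr x2 A2) = A2" using fld_restr[OF wo2 A2sub] .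
  then have A2p: "A2 = {p}" using p by simp
  have mi: "least_outside (fst x) A p"
    using least_outside_iff_ofilter_singleton[OF wo] A2 A2p x2_def by simp
  have "snd x p = c" using p x2_def by simp
  moreover have "weq (restr x A) y0" using i1 weq_iff_word_iso by blast
  ultimately show ?thesis using A mi by blast
qed

lemma lt_str_imp_str_less: fixes x :: "('i,'a::linorder) wd" and y :: "('j,'a) wd"
  assumes wx: "WO x" and wy: "WO y" and l: "lt_str x y" shows "str_less x y"
proof -
  obtain a b and y0 z z' :: "(nat,'a) wd" where ab: "a < b" "weq x (cat y0 (cat (letter a) z))"
     "weq y (cat y0 (cat (letter b) z'))" using l unfolding lt_str_def by blast
  obtain A p where A: "ofilter (fst x) A" "weq (restr x A) y0" "least_outside (fst x) A p" "snd x p = a"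
    using weq_cat_letterD[OF wx ab(2)] by blast
  obtain B q where B: "ofilter (fst y) B" "weq (restr y B) y0" "least_outside (fst y) B q" "snd y q = b"
    using weq_cat_letterD[OF wy ab(3)] by blast
  have "weq (restr x A) (restr y B)" using A(2) B(2) weq_sym weq_trans by blast
  then show ?thesis unfolding str_less_def using A B ab(1) by auto
qed

lemma weq_cat_letterI:
  assumes wo: "WO x" and A: "ofilter (fst x) A" and m: "least_outside (fst x) A a"
    and g: "word_iso (restr x A) y0 g"
  shows "weq x (cat y0 (cat (letter (snd x a)) (restr x (fld x - A - {a}))))"
proof -
  define x2 where "x2 = restr x (fld x - A)"
  have wo2: "WO x2" unfolding x2_def using WO_restr[OF wo] .
  have fx2: "fld x2 = fld x - A" unfolding x2_def using fld_restr[OF wo, of "fld x - A"] by simp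
  have ain: "a \<in> fld x" "a \<notin> A" using m by (auto simp: least_outside_def)
  have of2: "ofilter (fst x2) {a}" using least_outside_iff_ofilter_singleton[OF wo] m x2_def by simp
  have e1: "restr x2 {a} = restr x {a}" unfolding x2_def restr_restr using ain by (simp add: Int_absorb1)
  have f1: "fld (restr x {a}) = {a}" by (rule fld_restr[OF wo]) (use ain in simp)
  have i1: "word_iso (restr x2 {a}) (letter (snd x a)) (\<lambda>_. 0)" using word_iso_letterI[OF WO_restr[OF wo] f1] e1 by simp
  have e2: "restr x2 (fld x2 - {a}) = restr x (fld x - A - {a})" unfolding x2_def restr_restr fx2[unfolded x2_def]
    by (metis Diff_subset inf.absorb_iff2)
  have i2: "word_iso (restr x2 (fld x2 - {a})) (restr x (fld x - A - {a})) id" using e2 word_iso_id by metis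
  from cat_compose[OF wo2 of2 i1 i2]
  have i3: "\<exists>k. word_iso (restr x (fld x - A)) (cat (letter (snd x a)) (restr x (fld x - A - {a}))) k"
    unfolding x2_def by blast
  then obtain k where k: "word_iso (restr x (fld x - A)) (cat (letter (snd x a)) (restr x (fld x - A - {a}))) k" by blast
  from cat_compose[OF wo A g k] show ?thesis using weq_iff_word_iso by blast
qed

lemma str_less_imp_lt_str: fixes x y :: "(nat,'a::linorder) wd"
  assumes wfx: "wf_word x" and wfy: "wf_word y" and s: "str_less x y" shows "lt_str x y"
proof -
  have wx: "WO x" using wfx unfolding wf_word_def by blast
  have wy: "WO y" using wfy unfolding wf_word_def by blast
  obtain A B a b where AB: "ofilter (fst x) A" "ofilter (fst y) B" "weq (restr x A) (restr y B)"
      "least_outside (fst x) A a" "least_outside (fst y) B b" "snd x a < snd y b" using s unfolding str_less_def by blast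
  have i1: "word_iso (restr x A) (restr x A) id" by (rule word_iso_id)
  obtain g where g: "word_iso (restr y B) (restr x A) g" using AB(3) weq_sym weq_iff_word_iso by blast
  have e1: "weq x (cat (restr x A) (cat (letter (snd x a)) (restr x (fld x - A - {a}))))"
    using weq_cat_letterI[OF wx AB(1) AB(4) i1] .
  have e2: "weq y (cat (restr x A) (cat (letter (snd y b)) (restr y (fld y - B - {b}))))"
    using weq_cat_letterI[OF wy AB(2) AB(5) g] .
  have w1: "wf_word (restr x A)" "wf_word (restr x (fld x - A - {a}))" "wf_word (restr y (fld y - B - {b}))"
    using wf_word_restr wfx wfy by blast+
  show ?thesis unfolding lt_str_def using e1 e2 AB(6) w1 by blast
qed

lemma le_lex_iff_prefix_of_or_str_less: fixes x y :: "(nat,'a::linorder) wd"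
  assumes "wf_word x" "wf_word y" shows "le_lex x y \<longleftrightarrow> prefix_of x y \<or> str_less x y"
  using assms is_prefix_imp_prefix_of prefix_of_imp_is_prefix lt_str_imp_str_less str_less_imp_lt_str le_lex_def wf_word_def by metis

lemma fld_restr_ofilter: "WO x \<Longrightarrow> ofilter (fst x) A \<Longrightarrow> fld (restr x A) = A"
  using fld_restr ofilter_sub by blast

lemma ofilter_fld: "WO x \<Longrightarrow> ofilter (fst x) (fld x)"
  by (rule ofilterI) (auto intro: FieldI1)

lemma least_outside_unique: "Well_order r \<Longrightarrow> least_outside r A a \<Longrightarrow> least_outside r A a' \<Longrightarrow> a = a'"
  unfolding least_outside_def using Well_order_antisym by metis

lemma least_outside_mem:
  assumes "Well_order r" "ofilter r B0" "least_outside r B b" "\<not> B0 \<subseteq> B"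
  shows "b \<in> B0"
proof -
  obtain d where d: "d \<in> B0" "d \<notin> B" using assms(4) by blast
  have "d \<in> Field r" using d(1) ofilter_sub[OF assms(2)] by blast
  then have "(b,d) \<in> r" using assms(3) d(2) unfolding least_outside_def by blast
  then show ?thesis using ofilter_down[OF assms(2) d(1)] by blast
qed

lemma least_outsideD: "least_outside r A a \<Longrightarrow> a \<in> Field r \<and> a \<notin> A" unfolding least_outside_def by blast

lemma word_iso_restrD:
  assumes wx: "WO x" and wy: "WO y" and A: "A \<subseteq> fld x" and B: "B \<subseteq> fld y"
    and g: "word_iso (restr x A) (restr y B) g"
  shows "bij_betw g A B"
    and "\<And>a1 a2. a1 \<in> A \<Longrightarrow> a2 \<in> A \<Longrightarrow> (a1,a2) \<in> fst x \<longleftrightarrow> (g a1, g a2) \<in> fst y"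
proof -
  show gb: "bij_betw g A B" using word_iso_bij[OF g] fld_restr[OF wx A] fld_restr[OF wy B] by simp
  fix a1 a2 assume a: "a1 \<in> A" "a2 \<in> A"
  then have "g a1 \<in> B" "g a2 \<in> B" using gb bij_betwE by blast+
  then show "(a1,a2) \<in> fst x \<longleftrightarrow> (g a1, g a2) \<in> fst y"
    using word_iso_rel[OF g, of a1 a2] a fld_restr[OF wx A] by auto
qed

lemma ofilter_word_iso_image:
  assumes wx: "WO x" and wy: "WO y"
    and A: "ofilter (fst x) A" and B: "ofilter (fst y) B"
    and g: "word_iso (restr x A) (restr y B) g" and A': "ofilter (fst x) A'" and sub: "A' \<subseteq> A"
  shows "ofilter (fst y) (g ` A')" "g ` A' \<subseteq> B" "word_iso (restr x A') (restr y (g ` A')) g"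
proof -
  have fA: "fld (restr x A) = A" using fld_restr_ofilter[OF wx A] .
  note g' = word_iso_restrD[OF wx wy ofilter_sub[OF A] ofilter_sub[OF B] g]
  have gin: "\<And>a. a \<in> A \<Longrightarrow> g a \<in> B" using g'(1) bij_betwE by blast
  have gsurj: "g ` A = B" using g'(1) by (simp add: bij_betw_def)
  note gord = g'(2)
  show s2: "g ` A' \<subseteq> B" using gin sub by blast
  show "ofilter (fst y) (g ` A')"
  proof (rule ofilterI)
    show "g ` A' \<subseteq> fld y" using s2 ofilter_sub[OF B] by blast
  next
    fix b' c assume b': "b' \<in> g ` A'" and cb: "(c, b') \<in> fst y"
    obtain a' where a': "a' \<in> A'" "b' = g a'" using b' by blast
    have "c \<in> B" using ofilter_down[OF B _ cb] s2 b' by blast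
    then obtain a0 where a0: "a0 \<in> A" "c = g a0" using gsurj by blast
    have "(a0, a') \<in> fst x" using gord[OF a0(1)] sub a'(1) cb a'(2) a0(2) by blast
    then have "a0 \<in> A'" using ofilter_down[OF A' a'(1)] by blast
    then show "c \<in> g ` A'" using a0(2) by blast
  qed
  have "word_iso (restr (restr x A) A') (restr (restr y B) (g ` A')) g"
    using word_iso_restr[OF WO_restr[OF wx] WO_restr[OF wy] g] sub fA by simp
  moreover have "A \<inter> A' = A'" using sub by blast
  moreover have "B \<inter> g ` A' = g ` A'" using s2 by blast
  ultimately show "word_iso (restr x A') (restr y (g ` A')) g" by (simp add: restr_restr)
qed

lemma least_outside_word_iso_image:
  assumes wx: "WO x" and wy: "WO y"
    and A: "ofilter (fst x) A" and B: "ofilter (fst y) B"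
    and g: "word_iso (restr x A) (restr y B) g" and sub: "A' \<subseteq> A" and m: "least_outside (fst x) A' a" and aA: "a \<in> A"
  shows "least_outside (fst y) (g ` A') (g a)"
proof -
  note g' = word_iso_restrD[OF wx wy ofilter_sub[OF A] ofilter_sub[OF B] g]
  have gin: "\<And>a. a \<in> A \<Longrightarrow> g a \<in> B" using g'(1) bij_betwE by blast
  have ginj: "inj_on g A" and gsurj: "g ` A = B" using g'(1) by (simp_all add: bij_betw_def)
  note gord = g'(2)
  have anA': "a \<notin> A'" using least_outsideD[OF m] by blast
  have gaB: "g a \<in> B" using gin[OF aA] .
  have gaf: "g a \<in> fld y" using gaB ofilter_sub[OF B] by blast
  have gn: "g a \<notin> g ` A'"
  proof
    assume "g a \<in> g ` A'"
    then obtain a' where "a' \<in> A'" "g a = g a'" by blast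
    then have "a = a'" using inj_onD[OF ginj] aA sub by blast
    then show False using anA' \<open>a' \<in> A'\<close> by simp
  qed
  show ?thesis unfolding least_outside_def
  proof (intro conjI ballI impI)
    show "g a \<in> fld y" by (rule gaf)
    show "g a \<notin> g ` A'" by (rule gn)
  next
    fix c assume c: "c \<in> fld y" and cn: "c \<notin> g ` A'"
    show "(g a, c) \<in> fst y"
    proof (cases "c \<in> B")
      case True
      then obtain a0 where a0: "a0 \<in> A" "c = g a0" using gsurj by blast
      have "a0 \<notin> A'" using cn a0 by blast
      moreover have "a0 \<in> fld x" using a0(1) ofilter_sub[OF A] by blast
      ultimately have "(a, a0) \<in> fst x" using m unfolding least_outside_def by blast
      then show ?thesis using gord[OF aA a0(1)] a0(2) by simp
    next
      case False
      have "(g a, c) \<in> fst y \<or> (c, g a) \<in> fst y" using Well_order_total[OF wy gaf c] .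
      moreover have "(c, g a) \<notin> fst y" using ofilter_down[OF B gaB] False by blast
      ultimately show ?thesis by blast
    qed
  qed
qed

lemma ofilter_eq_if_weq_restr:
  assumes wx: "WO x" and A: "ofilter (fst x) A" and A': "ofilter (fst x) A'"
    and e: "weq (restr x A) (restr x A')"
  shows "A = A'"
proof (rule ccontr)
  assume ne: "A \<noteq> A'"
  obtain g where g: "word_iso (restr x A) (restr x A') g" using e weq_iff_word_iso by blast
  have "iso (Restr (fst x) A) (Restr (fst x) A') g"
    unfolding iso_iff2 using word_iso_bij[OF g] word_iso_rel[OF g] by simp
  then have io: "(Restr (fst x) A, Restr (fst x) A') \<in> ordIso"
    unfolding ordIso_def using Well_order_Restr wx by blast
  have "A \<subset> A' \<or> A' \<subset> A" using ofilter_linear[OF wx A A'] ne by blast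
  then show False
  proof
    assume "A \<subset> A'"
    then have "(Restr (fst x) A, Restr (fst x) A') \<in> ordLess" using ofilter_subset_ordLess[OF wx A A'] by blast
    then show False using io not_ordLess_ordIso by blast
  next
    assume "A' \<subset> A"
    then have "(Restr (fst x) A', Restr (fst x) A) \<in> ordLess" using ofilter_subset_ordLess[OF wx A' A] by blast
    then show False using ordIso_symmetric[OF io] not_ordLess_ordIso by blast
  qed
qed

lemma weq_imp_prefix_of: assumes "weq x y" "WO y" shows "prefix_of x y"
  unfolding prefix_of_def using assms ofilter_fld restr_fld by metis

lemma prefix_of_weq_left: "weq x' x \<Longrightarrow> prefix_of x y \<Longrightarrow> prefix_of x' y"
  unfolding prefix_of_def using weq_trans by blast

lemma prefix_of_trans:
  assumes wy: "WO y" and wz: "WO z" and p1: "prefix_of x y" and p2: "prefix_of y z"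
  shows "prefix_of x z"
proof -
  obtain B where B: "ofilter (fst y) B" "weq x (restr y B)" using p1 unfolding prefix_of_def by blast
  obtain C where C: "ofilter (fst z) C" "weq y (restr z C)" using p2 unfolding prefix_of_def by blast
  obtain g where g: "word_iso y (restr z C) g" using C(2) weq_iff_word_iso by blast
  have g': "word_iso (restr y (fld y)) (restr z C) g" using g by simp
  have Bs: "B \<subseteq> fld y" using ofilter_sub[OF B(1)] .
  have t1: "ofilter (fst z) (g ` B)" using ofilter_word_iso_image(1)[OF wy wz ofilter_fld[OF wy] C(1) g' B(1) Bs] .
  have t2: "word_iso (restr y B) (restr z (g ` B)) g" using ofilter_word_iso_image(3)[OF wy wz ofilter_fld[OF wy] C(1) g' B(1) Bs] .
  have "weq x (restr z (g ` B))" using B(2) t2 weq_iff_word_iso weq_trans by blast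
  then show ?thesis unfolding prefix_of_def using t1 by blast
qed

lemma prefix_of_weq_right: assumes "WO y" "WO y'" "prefix_of x y" "weq y y'" shows "prefix_of x y'"
  using prefix_of_trans[OF assms(1,2,3) weq_imp_prefix_of[OF assms(4,2)]] .

lemma str_less_prefix_of_right: assumes wx: "WO x" and wy: "WO y" and wz: "WO z"
  and s: "str_less x y" and p: "prefix_of y z" shows "str_less x z"
proof -
  obtain A B a b where AB: "ofilter (fst x) A" "ofilter (fst y) B" "weq (restr x A) (restr y B)"
      "least_outside (fst x) A a" "least_outside (fst y) B b" "snd x a < snd y b" using s unfolding str_less_def by blast
  obtain C where C: "ofilter (fst z) C" "weq y (restr z C)" using p unfolding prefix_of_def by blast
  obtain g where g: "word_iso y (restr z C) g" using C(2) weq_iff_word_iso by blast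
  have g': "word_iso (restr y (fld y)) (restr z C) g" using g by simp
  have Bs: "B \<subseteq> fld y" using ofilter_sub[OF AB(2)] .
  have t1: "ofilter (fst z) (g ` B)" using ofilter_word_iso_image(1)[OF wy wz ofilter_fld[OF wy] C(1) g' AB(2) Bs] .
  have t2: "word_iso (restr y B) (restr z (g ` B)) g" using ofilter_word_iso_image(3)[OF wy wz ofilter_fld[OF wy] C(1) g' AB(2) Bs] .
  have bf: "b \<in> fld y" using least_outsideD[OF AB(5)] by blast
  have t3: "least_outside (fst z) (g ` B) (g b)" using least_outside_word_iso_image[OF wy wz ofilter_fld[OF wy] C(1) g' Bs AB(5) bf] .
  have l: "snd z (g b) = snd y b" using word_iso_snd[OF g bf] by simp
  have "weq (restr x A) (restr z (g ` B))" using AB(3) t2 weq_iff_word_iso weq_trans by blast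
  then show ?thesis unfolding str_less_def using AB(1) t1 AB(4) t3 AB(6) l by force
qed

lemma str_less_prefix_of_left: assumes wx: "WO x" and wx': "WO x'" and wy: "WO y"
  and s: "str_less x y" and p: "prefix_of x x'" shows "str_less x' y"
proof -
  obtain A B a b where AB: "ofilter (fst x) A" "ofilter (fst y) B" "weq (restr x A) (restr y B)"
      "least_outside (fst x) A a" "least_outside (fst y) B b" "snd x a < snd y b" using s unfolding str_less_def by blast
  obtain C where C: "ofilter (fst x') C" "weq x (restr x' C)" using p unfolding prefix_of_def by blast
  obtain g where g: "word_iso x (restr x' C) g" using C(2) weq_iff_word_iso by blast
  have g': "word_iso (restr x (fld x)) (restr x' C) g" using g by simp
  have As: "A \<subseteq> fld x" using ofilter_sub[OF AB(1)] .
  have t1: "ofilter (fst x') (g ` A)" using ofilter_word_iso_image(1)[OF wx wx' ofilter_fld[OF wx] C(1) g' AB(1) As] .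
  have t2: "word_iso (restr x A) (restr x' (g ` A)) g" using ofilter_word_iso_image(3)[OF wx wx' ofilter_fld[OF wx] C(1) g' AB(1) As] .
  have af: "a \<in> fld x" using least_outsideD[OF AB(4)] by blast
  have t3: "least_outside (fst x') (g ` A) (g a)" using least_outside_word_iso_image[OF wx wx' ofilter_fld[OF wx] C(1) g' As AB(4) af] .
  have l: "snd x' (g a) = snd x a" using word_iso_snd[OF g af] by simp
  have "weq (restr x' (g ` A)) (restr y B)" using AB(3) t2 weq_iff_word_iso weq_trans weq_sym by blast
  then show ?thesis unfolding str_less_def using t1 AB(2) t3 AB(5) AB(6) l by force
qed

lemma str_less_weq_left: "WO x \<Longrightarrow> WO x' \<Longrightarrow> WO y \<Longrightarrow> str_less x y \<Longrightarrow> weq x x' \<Longrightarrow> str_less x' y"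
  using str_less_prefix_of_left weq_imp_prefix_of by blast

lemma prefix_of_str_less: assumes wx: "WO x" and wy: "WO y" and wz: "WO z"
  and p: "prefix_of x y" and s: "str_less y z" shows "str_less x z \<or> prefix_of x z"
proof -
  obtain B0 where B0: "ofilter (fst y) B0" "weq x (restr y B0)" using p unfolding prefix_of_def by blast
  obtain B C b c where BC: "ofilter (fst y) B" "ofilter (fst z) C" "weq (restr y B) (restr z C)"
      "least_outside (fst y) B b" "least_outside (fst z) C c" "snd y b < snd z c" using s unfolding str_less_def by blast
  obtain h where h: "word_iso (restr y B) (restr z C) h" using BC(3) weq_iff_word_iso by blast
  show ?thesis
  proof (cases "B0 \<subseteq> B")
    case True
    have t1: "ofilter (fst z) (h ` B0)" using ofilter_word_iso_image(1)[OF wy wz BC(1) BC(2) h B0(1) True] .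
    have t2: "word_iso (restr y B0) (restr z (h ` B0)) h" using ofilter_word_iso_image(3)[OF wy wz BC(1) BC(2) h B0(1) True] .
    have "weq x (restr z (h ` B0))" using B0(2) t2 weq_iff_word_iso weq_trans by blast
    then show ?thesis unfolding prefix_of_def using t1 by blast
  next
    case False
    have bB0: "b \<in> B0" using least_outside_mem[OF wy B0(1) BC(4) False] .
    have BB0: "B \<subseteq> B0" using ofilter_linear[OF wy B0(1) BC(1)] False by blast
    obtain k where k: "word_iso (restr y B0) x k" using B0(2) weq_sym weq_iff_word_iso by blast
    have k': "word_iso (restr y B0) (restr x (fld x)) k" using k by simp
    have t1: "ofilter (fst x) (k ` B)" using ofilter_word_iso_image(1)[OF wy wx B0(1) ofilter_fld[OF wx] k' BC(1) BB0] .
    have t2: "word_iso (restr y B) (restr x (k ` B)) k" using ofilter_word_iso_image(3)[OF wy wx B0(1) ofilter_fld[OF wx] k' BC(1) BB0] .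
    have t3: "least_outside (fst x) (k ` B) (k b)" using least_outside_word_iso_image[OF wy wx B0(1) ofilter_fld[OF wx] k' BB0 BC(4) bB0] .
    have l: "snd x (k b) = snd y b" using word_iso_snd[OF k] bB0 fld_restr_ofilter[OF wy B0(1)] by simp
    have "weq (restr x (k ` B)) (restr z C)" using BC(3) t2 weq_iff_word_iso weq_trans weq_sym by blast
    then have "str_less x z" unfolding str_less_def using t1 BC(2) t3 BC(5) BC(6) l by force
    then show ?thesis by blast
  qed
qed

lemma str_less_trans: assumes wx: "WO x" and wy: "WO y" and wz: "WO z"
  and s1: "str_less x y" and s2: "str_less y z" shows "str_less x z"
proof -
  obtain A B a b where AB: "ofilter (fst x) A" "ofilter (fst y) B" "weq (restr x A) (restr y B)"
      "least_outside (fst x) A a" "least_outside (fst y) B b" "snd x a < snd y b" using s1 unfolding str_less_def by blast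
  obtain B' C b' c where BC: "ofilter (fst y) B'" "ofilter (fst z) C" "weq (restr y B') (restr z C)"
      "least_outside (fst y) B' b'" "least_outside (fst z) C c" "snd y b' < snd z c" using s2 unfolding str_less_def by blast
  consider (eq) "B = B'" | (less) "B \<subseteq> B'" "\<not> B' \<subseteq> B" | (gt) "B' \<subseteq> B" "\<not> B \<subseteq> B'"
    using ofilter_linear[OF wy AB(2) BC(1)] by blast
  then show ?thesis
  proof cases
    case eq
    then have "b = b'" using least_outside_unique[OF wy AB(5)] BC(4) by simp
    moreover have "weq (restr x A) (restr z C)" using AB(3) BC(3) eq weq_trans by blast
    ultimately show ?thesis unfolding str_less_def using AB(1,4,6) BC(2,5,6) by force
  next
    case less
    have bB: "b \<in> B'" using least_outside_mem[OF wy BC(1) AB(5) less(2)] .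
    obtain h where h: "word_iso (restr y B') (restr z C) h" using BC(3) weq_iff_word_iso by blast
    have t1: "ofilter (fst z) (h ` B)" using ofilter_word_iso_image(1)[OF wy wz BC(1) BC(2) h AB(2) less(1)] .
    have t2: "word_iso (restr y B) (restr z (h ` B)) h" using ofilter_word_iso_image(3)[OF wy wz BC(1) BC(2) h AB(2) less(1)] .
    have t3: "least_outside (fst z) (h ` B) (h b)" using least_outside_word_iso_image[OF wy wz BC(1) BC(2) h less(1) AB(5) bB] .
    have l: "snd z (h b) = snd y b" using word_iso_snd[OF h] bB fld_restr_ofilter[OF wy BC(1)] by simp
    have "weq (restr x A) (restr z (h ` B))" using AB(3) t2 weq_iff_word_iso weq_trans by blast
    then show ?thesis unfolding str_less_def using AB(1,4,6) t1 t3 l by force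
  next
    case gt
    have bB: "b' \<in> B" using least_outside_mem[OF wy AB(2) BC(4) gt(2)] .
    obtain k where k: "word_iso (restr y B) (restr x A) k" using AB(3) weq_sym weq_iff_word_iso by blast
    have t1: "ofilter (fst x) (k ` B')" using ofilter_word_iso_image(1)[OF wy wx AB(2) AB(1) k BC(1) gt(1)] .
    have t2: "word_iso (restr y B') (restr x (k ` B')) k" using ofilter_word_iso_image(3)[OF wy wx AB(2) AB(1) k BC(1) gt(1)] .
    have t3: "least_outside (fst x) (k ` B') (k b')" using least_outside_word_iso_image[OF wy wx AB(2) AB(1) k gt(1) BC(4) bB] .
    have l: "snd x (k b') = snd y b'" using word_iso_snd[OF k] bB fld_restr_ofilter[OF wy AB(2)] by simp
    have "weq (restr x (k ` B')) (restr z C)" using BC(3) t2 weq_iff_word_iso weq_trans weq_sym by blast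
    then show ?thesis unfolding str_less_def using BC(2,5,6) t1 t3 l by force
  qed
qed

lemma prefix_of_antisym:
  assumes wx: "WO x" and wy: "WO y" and p1: "prefix_of x y" and p2: "prefix_of y x"
  shows "weq x y"
proof -
  obtain B where B: "ofilter (fst y) B" "weq x (restr y B)" using p1 unfolding prefix_of_def by blast
  obtain A where A: "ofilter (fst x) A" "weq y (restr x A)" using p2 unfolding prefix_of_def by blast
  obtain g where g: "word_iso y (restr x A) g" using A(2) weq_iff_word_iso by blast
  have g': "word_iso (restr y (fld y)) (restr x A) g" using g by simp
  have Bs: "B \<subseteq> fld y" using ofilter_sub[OF B(1)] .
  have t1: "ofilter (fst x) (g ` B)" using ofilter_word_iso_image(1)[OF wy wx ofilter_fld[OF wy] A(1) g' B(1) Bs] .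
  have t2: "g ` B \<subseteq> A" using ofilter_word_iso_image(2)[OF wy wx ofilter_fld[OF wy] A(1) g' B(1) Bs] .
  have t3: "word_iso (restr y B) (restr x (g ` B)) g" using ofilter_word_iso_image(3)[OF wy wx ofilter_fld[OF wy] A(1) g' B(1) Bs] .
  have "weq (restr x (fld x)) (restr x (g ` B))" using B(2) t3 weq_iff_word_iso weq_trans by (metis restr_fld)
  then have "fld x = g ` B" using ofilter_eq_if_weq_restr[OF wx ofilter_fld[OF wx] t1] by blast
  then have "A = fld x" using t2 ofilter_sub[OF A(1)] by blast
  then have "weq y x" using A(2) by simp
  then show ?thesis by (rule weq_sym)
qed

lemma str_less_prefix_of_contra:
  assumes wx: "WO x" and wy: "WO y" and s: "str_less x y" and p: "prefix_of y x"
  shows False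
proof -
  obtain A B a b where AB: "ofilter (fst x) A" "ofilter (fst y) B" "weq (restr x A) (restr y B)"
      "least_outside (fst x) A a" "least_outside (fst y) B b" "snd x a < snd y b" using s unfolding str_less_def by blast
  obtain A0 where A0: "ofilter (fst x) A0" "weq y (restr x A0)" using p unfolding prefix_of_def by blast
  obtain g where g: "word_iso y (restr x A0) g" using A0(2) weq_iff_word_iso by blast
  have g': "word_iso (restr y (fld y)) (restr x A0) g" using g by simp
  have Bs: "B \<subseteq> fld y" using ofilter_sub[OF AB(2)] .
  have t1: "ofilter (fst x) (g ` B)" using ofilter_word_iso_image(1)[OF wy wx ofilter_fld[OF wy] A0(1) g' AB(2) Bs] .
  have t3: "word_iso (restr y B) (restr x (g ` B)) g" using ofilter_word_iso_image(3)[OF wy wx ofilter_fld[OF wy] A0(1) g' AB(2) Bs] .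
  have bf: "b \<in> fld y" using least_outsideD[OF AB(5)] by blast
  have t4: "least_outside (fst x) (g ` B) (g b)" using least_outside_word_iso_image[OF wy wx ofilter_fld[OF wy] A0(1) g' Bs AB(5) bf] .
  have "weq (restr x A) (restr x (g ` B))" using AB(3) t3 weq_iff_word_iso weq_trans by blast
  then have "A = g ` B" using ofilter_eq_if_weq_restr[OF wx AB(1) t1] by blast
  then have "g b = a" using least_outside_unique[OF wx t4] AB(4) by simp
  moreover have "snd y b = snd x (g b)" using word_iso_snd[OF g bf] by simp
  ultimately show False using AB(6) by simp
qed

lemma str_less_irrefl: assumes wx: "WO x" and s: "str_less x x" shows False
proof -
  obtain A B a b where AB: "ofilter (fst x) A" "ofilter (fst x) B" "weq (restr x A) (restr x B)"
      "least_outside (fst x) A a" "least_outside (fst x) B b" "snd x a < snd x b" using s unfolding str_less_def by blast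
  have "A = B" using ofilter_eq_if_weq_restr[OF wx AB(1) AB(2) AB(3)] .
  then have "a = b" using least_outside_unique[OF wx AB(4)] AB(5) by simp
  then show False using AB(6) by simp
qed

definition lex_le :: "('i,'a::linorder) wd \<Rightarrow> ('j,'a) wd \<Rightarrow> bool" where
  "lex_le x y \<longleftrightarrow> prefix_of x y \<or> str_less x y"

definition lex_less :: "('i,'a::linorder) wd \<Rightarrow> ('j,'a) wd \<Rightarrow> bool" where
  "lex_less x y \<longleftrightarrow> lex_le x y \<and> \<not> weq x y"

lemma prefix_of_imp_lex_le: "prefix_of x y \<Longrightarrow> lex_le x y" unfolding lex_le_def by blast
lemma str_less_imp_lex_le: "str_less x y \<Longrightarrow> lex_le x y" unfolding lex_le_def by blast

lemma lex_le_trans: assumes "WO x" "WO y" "WO z" "lex_le x y" "lex_le y z" shows "lex_le x z"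
  using assms prefix_of_trans str_less_prefix_of_right prefix_of_str_less str_less_trans unfolding lex_le_def by metis

lemma lex_le_antisym:
  assumes wx: "WO x" and wy: "WO y" and l1: "lex_le x y" and l2: "lex_le y x"
  shows "weq x y"
proof -
  have "prefix_of x y \<and> prefix_of y x" 
    using l1 l2 str_less_prefix_of_contra[OF wx wy] str_less_prefix_of_contra[OF wy wx] str_less_trans[OF wx wy wx] str_less_irrefl[OF wx]
    unfolding lex_le_def by blast
  then show ?thesis using prefix_of_antisym[OF wx wy] by blast
qed

lemma weq_imp_lex_le: "weq x y \<Longrightarrow> WO y \<Longrightarrow> lex_le x y" using weq_imp_prefix_of prefix_of_imp_lex_le by blast

lemma lex_le_weq_right: "WO x \<Longrightarrow> WO y \<Longrightarrow> WO z \<Longrightarrow> lex_le x y \<Longrightarrow> weq y z \<Longrightarrow> lex_le x z"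
  using lex_le_trans weq_imp_lex_le by blast

lemma lex_less_le_trans: assumes "WO x" "WO y" "WO z" "lex_less x y" "lex_le y z" shows "lex_less x z"
proof -
  have l1: "lex_le x y" "\<not> weq x y" using assms(4) unfolding lex_less_def by auto
  have l2: "lex_le x z" using lex_le_trans assms(1,2,3) l1(1) assms(5) by blast
  have "\<not> weq x z"
  proof
    assume "weq x z"
    then have "lex_le z x" using weq_imp_lex_le weq_sym assms(1) by blast
    then have "lex_le y x" using lex_le_trans assms(2,3,1) assms(5) by blast
    then show False using lex_le_antisym assms(1,2) l1 by blast
  qed
  then show ?thesis using l2 unfolding lex_less_def by blast
qed

lemma lex_le_less_trans: assumes "WO x" "WO y" "WO z" "lex_le x y" "lex_less y z" shows "lex_less x z"
proof -
  have l1: "lex_le y z" "\<not> weq y z" using assms(5) unfolding lex_less_def by auto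
  have l2: "lex_le x z" using lex_le_trans assms(1,2,3) assms(4) l1(1) by blast
  have "\<not> weq x z"
  proof
    assume "weq x z"
    then have "lex_le z x" using weq_imp_lex_le weq_sym assms(1) by blast
    then have "lex_le z y" using lex_le_trans assms(3,1,2) assms(4) by blast
    then show False using lex_le_antisym assms(2,3) l1 by blast
  qed
  then show ?thesis using l2 unfolding lex_less_def by blast
qed

lemma lex_less_not_le: assumes "WO x" "WO y" "lex_less x y" shows "\<not> lex_le y x"
  using assms lex_le_antisym unfolding lex_less_def by blast

lemma least_outside_exists:
  assumes "Well_order r" "B \<subseteq> Field r" "B \<noteq> Field r"
  shows "\<exists>k. least_outside r B k"
proof -
  obtain m where "m \<in> Field r - B" "\<forall>b\<in>Field r - B. (m,b) \<in> r"
    using Well_order_least[OF assms(1), of "Field r - B"] assms(2,3) by blast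
  then show ?thesis unfolding least_outside_def by blast
qed

lemma least_outside_underS: assumes wo: "Well_order r" and m: "m \<in> Field r"
  shows "least_outside r (underS r m) m"
  unfolding least_outside_def
proof (intro conjI ballI impI)
  fix c assume "c \<in> Field r" "c \<notin> underS r m"
  then show "(m, c) \<in> r" using Well_order_total[OF wo m] Well_order_refl[OF wo m] unfolding underS_def by blast
qed (use m in \<open>simp_all add: underS_def\<close>)

lemma embed_word_iso:
  assumes wx: "WO x" and wy: "WO y" and em: "embed (fst x) (fst y) f" and A: "A \<subseteq> fld x"
    and same: "\<forall>d\<in>A. snd x d = snd y (f d)"
  shows "word_iso (restr x A) (restr y (f ` A)) f"
proof (rule word_isoI)
  have inj: "inj_on f (fld x)" using embed_inj_on[OF wx em] .
  have fA: "f ` A \<subseteq> fld y" using embed_in_Field[OF em] A by blast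
  show "bij_betw f (fld (restr x A)) (fld (restr y (f ` A)))"
    unfolding fld_restr[OF wx A] fld_restr[OF wy fA] using inj A inj_on_subset bij_betw_imageI by blast
next
  fix p q assume "p \<in> fld (restr x A)" "q \<in> fld (restr x A)"
  then have pq: "p \<in> A" "q \<in> A" using fld_restr[OF wx A] by auto
  then have p: "p \<in> fld x" and q: "q \<in> fld x" using A by auto
  have compat: "\<And>a b. (a, b) \<in> fst x \<Longrightarrow> (f a, f b) \<in> fst y"
    using embed_compat[OF em] unfolding compat_def by blast
  have "(f p, f q) \<in> fst y \<Longrightarrow> (p, q) \<in> fst x"
  proof (rule ccontr)
    assume fpq: "(f p, f q) \<in> fst y" and n: "(p, q) \<notin> fst x"
    then have "(f q, f p) \<in> fst y" using Well_order_total[OF wx p q] compat by blast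
    then have "f p = f q" using Well_order_antisym[OF wy fpq] by blast
    then have "p = q" using inj_onD[OF embed_inj_on[OF wx em] _ p q] by blast
    then show False using n Well_order_refl[OF wx p] by simp
  qed
  then show "(p, q) \<in> fst (restr x A) \<longleftrightarrow> (f p, f q) \<in> fst (restr y (f ` A))"
    using pq compat by auto
next
  fix p assume "p \<in> fld (restr x A)"
  then show "snd (restr x A) p = snd (restr y (f ` A)) (f p)" using same fld_restr[OF wx A] by auto
qed

lemma embed_imp_lex_le:
  assumes wx: "WO x" and wy: "WO y" and em: "embed (fst x) (fst y) f"
  shows "lex_le x y \<or> lex_le y x"
proof -
  define D where "D = {d \<in> fld x. snd x d \<noteq> snd y (f d)}"
  show ?thesis
  proof (cases "D = {}")
    case True
    then have "word_iso (restr x (fld x)) (restr y (f ` fld x)) f"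
      using embed_word_iso[OF wx wy em] D_def by blast
    then have "prefix_of x y"
      using prefix_ofI[OF embed_Field_ofilter[OF wx wy em]] weq_iff_word_iso restr_fld by metis
    then show ?thesis using prefix_of_imp_lex_le by blast
  next
    case False
    have "D \<subseteq> fld x" unfolding D_def by blast
    then obtain m where m: "m \<in> D" "\<forall>d\<in>D. (m,d) \<in> fst x"
      using Well_order_least[OF wx _ False] by blast
    have mx: "m \<in> fld x" using m(1) D_def by blast
    let ?A = "underS (fst x) m"
    have A: "ofilter (fst x) ?A" using wo_rel.underS_ofilter[of "fst x"] wx unfolding wo_rel_def .
    have B: "ofilter (fst y) (f ` ?A)" using embed_preserves_ofilter[OF wx wy em A] .
    have "\<forall>d\<in>?A. snd x d = snd y (f d)"
    proof
      fix d assume d: "d \<in> ?A"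
      then have "(m, d) \<notin> fst x" using Well_order_antisym[OF wx] unfolding underS_def by blast
      then show "snd x d = snd y (f d)" using m(2) d ofilter_sub[OF A] D_def by blast
    qed
    then have AB: "weq (restr x ?A) (restr y (f ` ?A))"
      using embed_word_iso[OF wx wy em ofilter_sub[OF A]] weq_iff_word_iso by blast
    have mA: "least_outside (fst x) ?A m" using least_outside_underS[OF wx mx] .
    have mB: "least_outside (fst y) (f ` ?A) (f m)"
      using least_outside_underS[OF wy embed_in_Field[OF em mx]] embed_underS[OF wx em mx]
      by (simp add: bij_betw_def)
    have "snd x m < snd y (f m) \<or> snd y (f m) < snd x m"
      using m(1) D_def by auto
    then show ?thesis
    proof
      assume "snd x m < snd y (f m)"
      then have "str_less x y" using str_lessI[OF A B AB mA mB] by blast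
      then show ?thesis using str_less_imp_lex_le by blast
    next
      assume "snd y (f m) < snd x m"
      then have "str_less y x" using str_lessI[OF B A weq_sym[OF AB] mB mA] by blast
      then show ?thesis using str_less_imp_lex_le by blast
    qed
  qed
qed

lemma lex_le_total: assumes wx: "WO x" and wy: "WO y" shows "lex_le x y \<or> lex_le y x"
proof -
  have "(\<exists>f. embed (fst x) (fst y) f) \<or> (\<exists>f. embed (fst y) (fst x) f)"
    using wellorders_totally_ordered[OF wx wy] .
  then show ?thesis using embed_imp_lex_le[OF wx wy] embed_imp_lex_le[OF wy wx] by blast
qed

lemma not_lex_le_imp_less: assumes "WO x" "WO y" "\<not> lex_le x y" shows "lex_less y x"
  using assms lex_le_total weq_imp_lex_le weq_sym unfolding lex_less_def by metis

text \<open>A witness that \<open>p\<close> is below the prefix \<open>B \<union> {k}\<close> of \<open>r\<close>: \<open>g\<close> matches the prefix \<open>B\<close>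
  with the prefix \<open>A\<close> of \<open>p\<close>, and either \<open>p\<close> ends there or its next letter is below \<open>snd r k\<close>.\<close>
definition lex_less_at :: "('i,'a::linorder) wd \<Rightarrow> ('j,'a) wd \<Rightarrow> 'j set \<Rightarrow> 'i set \<Rightarrow> ('j \<Rightarrow> 'i) \<Rightarrow> 'j \<Rightarrow> bool" where
  "lex_less_at p r B A g k \<longleftrightarrow> ofilter (fst r) B \<and> least_outside (fst r) B k \<and> ofilter (fst p) A
     \<and> word_iso (restr r B) (restr p A) g \<and> (A = fld p \<or> (\<exists>a. least_outside (fst p) A a \<and> snd p a < snd r k))"

lemma lex_less_imp_lex_less_at:
  assumes wp: "WO p" and wr: "WO r" and l: "lex_less p r"
  shows "\<exists>B A g k. lex_less_at p r B A g k"
proof -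
  have l1: "prefix_of p r \<or> str_less p r" "\<not> weq p r" using l unfolding lex_less_def lex_le_def by auto
  show ?thesis
  proof (cases "prefix_of p r")
    case True
    obtain B where B: "ofilter (fst r) B" "weq p (restr r B)" using True unfolding prefix_of_def by blast
    have Bs: "B \<subseteq> fld r" using ofilter_sub[OF B(1)] .
    have "B \<noteq> fld r" using B(2) l1(2) by auto
    then obtain k where k: "least_outside (fst r) B k" using least_outside_exists[OF wr Bs] by blast
    obtain g where g: "word_iso (restr r B) p g" using B(2) weq_sym weq_iff_word_iso by blast
    then have g': "word_iso (restr r B) (restr p (fld p)) g" by simp
    show ?thesis unfolding lex_less_at_def using B(1) k ofilter_fld[OF wp] g' by blast
  next
    case False
    then have "str_less p r" using l1 by blast
    then obtain A B a k where AB: "ofilter (fst p) A" "ofilter (fst r) B" "weq (restr p A) (restr r B)"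
      "least_outside (fst p) A a" "least_outside (fst r) B k" "snd p a < snd r k" unfolding str_less_def by blast
    obtain g where g: "word_iso (restr r B) (restr p A) g" using AB(3) weq_sym weq_iff_word_iso by blast
    show ?thesis unfolding lex_less_at_def using AB g by blast
  qed
qed

lemma least_outside_restr_insert:
  assumes wr: "WO r" and B: "ofilter (fst r) B" and k: "least_outside (fst r) B k"
  shows "ofilter (fst (restr r (B \<union> {k}))) B" and "least_outside (fst (restr r (B \<union> {k}))) B k"
    and "fld (restr r (B \<union> {k})) \<noteq> B"
proof -
  have kr: "k \<in> fld r" "k \<notin> B" using least_outsideD[OF k] by auto
  have "B \<union> {k} \<subseteq> fld r" using ofilter_sub[OF B] kr by blast
  then have fld: "fld (restr r (B \<union> {k})) = B \<union> {k}" by (rule fld_restr[OF wr])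
  show "ofilter (fst (restr r (B \<union> {k}))) B"
  proof (rule ofilterI)
    fix a c assume "a \<in> B" "(c, a) \<in> fst (restr r (B \<union> {k}))"
    then show "c \<in> B" using ofilter_down[OF B] by auto
  qed (use fld in blast)
  show "least_outside (fst (restr r (B \<union> {k}))) B k"
    unfolding least_outside_def fld using kr Well_order_refl[OF wr kr(1)] by auto
  show "fld (restr r (B \<union> {k})) \<noteq> B" using fld kr by blast
qed

lemma lex_less_at_imp_lex_less: assumes wp: "WO p" and wr: "WO r" and v: "lex_less_at p r B A g k"
  shows "lex_less p (restr r (B \<union> {k}))"
proof -
  have B: "ofilter (fst r) B" and k: "least_outside (fst r) B k" and A: "ofilter (fst p) A"
    and g: "word_iso (restr r B) (restr p A) g" and alt: "A = fld p \<or> (\<exists>a. least_outside (fst p) A a \<and> snd p a < snd r k)"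
    using v unfolding lex_less_at_def by auto
  let ?r' = "restr r (B \<union> {k})"
  have wr': "WO ?r'" using WO_restr[OF wr] .
  note B' = least_outside_restr_insert[OF wr B k]
  have "(B \<union> {k}) \<inter> B = B" by blast
  then have eB: "restr ?r' B = restr r B" by (simp add: restr_restr)
  have nw: "\<not> weq (restr ?r' B) ?r'"
  proof
    assume "weq (restr ?r' B) ?r'"
    then have "weq (restr ?r' B) (restr ?r' (fld ?r'))" by (simp only: restr_fld)
    then show False using ofilter_eq_if_weq_restr[OF wr' B'(1) ofilter_fld[OF wr']] B'(3) by blast
  qed
  have gB: "weq (restr p A) (restr ?r' B)" using g eB weq_iff_word_iso weq_sym by metis
  from alt show ?thesis
  proof
    assume "A = fld p"
    then have "weq p (restr ?r' B)" using gB by simp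
    moreover have "\<not> weq p ?r'" using nw calculation weq_sym weq_trans by blast
    ultimately show ?thesis using prefix_ofI[OF B'(1)] prefix_of_imp_lex_le unfolding lex_less_def by blast
  next
    assume "\<exists>a. least_outside (fst p) A a \<and> snd p a < snd r k"
    then obtain a where a: "least_outside (fst p) A a" "snd p a < snd r k" by blast
    have s: "str_less p ?r'" using str_lessI[OF A B'(1) gB a(1) B'(2)] a(2) by simp
    have "\<not> weq p ?r'"
      using str_less_prefix_of_contra[OF wp wr' s] weq_imp_prefix_of[OF weq_sym wp] by blast
    then show ?thesis using s str_less_imp_lex_le unfolding lex_less_def by blast
  qed
qed

lemma ofilter_restr_diff:
  assumes "WO r" "ofilter (fst r) B" shows "ofilter (fst (restr r (fld r - P))) (B - P)"
proof (rule ofilterI)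
  show "B - P \<subseteq> fld (restr r (fld r - P))" using fld_restr[OF assms(1), of "fld r - P"] ofilter_sub[OF assms(2)] by auto
next
  fix a c assume "a \<in> B - P" "(c,a) \<in> fst (restr r (fld r - P))"
  then show "c \<in> B - P" using ofilter_down[OF assms(2)] by auto
qed

lemma least_outside_restr_diff:
  assumes wr: "WO r" and k: "least_outside (fst r) B k" and PB: "P \<subseteq> B"
  shows "least_outside (fst (restr r (fld r - P))) (B - P) k"
  unfolding least_outside_def
proof (intro conjI ballI impI)
  have "k \<in> fld r" "k \<notin> B" using least_outsideD[OF k] by auto
  then show "k \<in> fld (restr r (fld r - P))" "k \<notin> B - P" using fld_restr[OF wr, of "fld r - P"] PB by auto
next
  fix c assume c: "c \<in> fld (restr r (fld r - P))" "c \<notin> B - P"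
  then have "c \<in> fld r - P" "c \<notin> B" using fld_restr[OF wr, of "fld r - P"] by auto
  moreover have "k \<notin> P" using least_outsideD[OF k] PB by blast
  ultimately show "(k,c) \<in> fst (restr r (fld r - P))" using k least_outsideD[OF k] unfolding least_outside_def by auto
qed

lemma lex_less_at_shift:
  assumes wp: "WO p" and wr: "WO r" and v: "lex_less_at p r B A g k" and P: "ofilter (fst r) P" and PB: "P \<subseteq> B"
  shows "ofilter (fst p) (g ` P)" "word_iso (restr r P) (restr p (g ` P)) g"
    "lex_less_at (restr p (fld p - g ` P)) (restr r (fld r - P)) (B - P) (A - g ` P) g k"
proof -
  have B: "ofilter (fst r) B" and k: "least_outside (fst r) B k" and A: "ofilter (fst p) A"
    and g: "word_iso (restr r B) (restr p A) g" and alt: "A = fld p \<or> (\<exists>a. least_outside (fst p) A a \<and> snd p a < snd r k)"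
    using v unfolding lex_less_at_def by auto
  show "ofilter (fst p) (g ` P)" using ofilter_word_iso_image(1)[OF wr wp B A g P PB] .
  have gPA: "g ` P \<subseteq> A" using ofilter_word_iso_image(2)[OF wr wp B A g P PB] .
  show "word_iso (restr r P) (restr p (g ` P)) g" using ofilter_word_iso_image(3)[OF wr wp B A g P PB] .
  let ?q = "restr p (fld p - g ` P)" and ?r' = "restr r (fld r - P)"
  have Bs: "B \<subseteq> fld r" and As: "A \<subseteq> fld p" using ofilter_sub[OF B] ofilter_sub[OF A] .
  have gb: "bij_betw g B A" using word_iso_bij[OF g] fld_restr[OF wr Bs] fld_restr[OF wp As] by simp
  then have im: "g ` (B - P) = A - g ` P"
    using inj_on_image_set_diff[of g B B P] PB unfolding bij_betw_def by blast
  have "word_iso (restr (restr r B) (B - P)) (restr (restr p A) (g ` (B - P))) g"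
    using word_iso_restr[OF WO_restr[OF wr] WO_restr[OF wp] g] fld_restr[OF wr Bs] by blast
  then have iso: "word_iso (restr ?r' (B - P)) (restr ?q (A - g ` P)) g"
    using im Bs As gPA by (simp add: restr_restr Int_absorb1 Diff_mono)
  have "A - g ` P = fld ?q \<or> (\<exists>a. least_outside (fst ?q) (A - g ` P) a \<and> snd ?q a < snd ?r' k)"
    using alt fld_restr[OF wp, of "fld p - g ` P"] least_outside_restr_diff[OF wp _ gPA]
      least_outsideD[OF k] ofilter_sub[OF P] by auto
  then show "lex_less_at ?q ?r' (B - P) (A - g ` P) g k"
    unfolding lex_less_at_def
    using ofilter_restr_diff[OF wr B] least_outside_restr_diff[OF wr k PB] ofilter_restr_diff[OF wp A] iso by blast
qed

lemma prime_nonempty: fixes w :: "(nat,'a::linorder) wd" assumes "prime_word w" shows "fld w \<noteq> {}"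
proof
  assume e: "fld w = {}"
  have pw: "primitive w" using assms unfolding prime_word_def by blast
  have wfw: "wf_word w" using assms unfolding prime_word_def by blast
  have f0: "fld (wprod ({} :: nat rel) (\<lambda>_. w)) = {}" unfolding wprod_def Field_def by auto
  have "word_iso w (wprod ({} :: nat rel) (\<lambda>_. w)) (\<lambda>_. undefined)"
    by (rule word_isoI) (use e f0 in \<open>auto simp: bij_betw_def\<close>)
  then have "weq w (wprod ({} :: nat rel) (\<lambda>_. w))" using weq_iff_word_iso by blast
  moreover have "Well_order ({} :: nat rel)" by simp
  ultimately have "\<exists>b. Field ({} :: nat rel) = {b}" using pw wfw unfolding primitive_def by blast
  then show False by simp
qed

lemma ofilter_restrI: assumes wo: "WO x" and S: "S \<subseteq> fld x" and J: "J \<subseteq> S"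
  and down: "\<And>d d'. d \<in> J \<Longrightarrow> d' \<in> S \<Longrightarrow> (d',d) \<in> fst x \<Longrightarrow> d' \<in> J"
  shows "ofilter (fst (restr x S)) J"
proof (rule ofilterI)
  show "J \<subseteq> fld (restr x S)" using fld_restr[OF wo S] J by simp
next
  fix a b assume "a \<in> J" "(b,a) \<in> fst (restr x S)"
  then show "b \<in> J" using down by auto
qed

lemma prefix_of_restr: assumes wo: "WO x" and S: "S \<subseteq> fld x" and J: "ofilter (fst (restr x S)) J"
  shows "prefix_of (restr x J) (restr x S)"
proof -
  have "J \<subseteq> S" using ofilter_sub[OF J] fld_restr[OF wo S] by simp
  then have "restr (restr x S) J = restr x J" by (simp add: restr_restr Int_absorb1)
  then show ?thesis unfolding prefix_of_def using J weq_refl by metis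
qed

lemma restr_not_weq: assumes wo: "WO x" and S: "S \<subseteq> fld x" and J: "ofilter (fst (restr x S)) J" and ne: "J \<noteq> S"
  shows "\<not> weq (restr x J) (restr x S)"
proof
  assume e: "weq (restr x J) (restr x S)"
  have fS: "fld (restr x S) = S" using fld_restr[OF wo S] .
  have "J \<subseteq> S" using ofilter_sub[OF J] fS by simp
  then have "restr (restr x S) J = restr x J" by (simp add: restr_restr Int_absorb1)
  then have "weq (restr (restr x S) J) (restr (restr x S) (fld (restr x S)))" using e by (simp only: restr_fld)
  then have "J = fld (restr x S)" using ofilter_eq_if_weq_restr[OF WO_restr[OF wo] J ofilter_fld[OF WO_restr[OF wo]]] by blast
  then show False using ne fS by simp
qed

lemma proper_suffix_restr_diff: fixes w :: "(nat,'a) wd"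
  assumes wf: "wf_word w" and J: "ofilter (fst w) J" and ne1: "J \<noteq> {}" and ne2: "fld w - J \<noteq> {}"
  shows "proper_suffix (restr w (fld w - J)) w"
proof -
  have wo: "WO w" using wf unfolding wf_word_def by blast
  have Js: "J \<subseteq> fld w" using ofilter_sub[OF J] .
  have i1: "word_iso (restr w J) (restr w J) id" by (rule word_iso_id)
  have i2: "word_iso (restr w (fld w - J)) (restr w (fld w - J)) id" by (rule word_iso_id)
  have "weq w (cat (restr w J) (restr w (fld w - J)))" using cat_compose[OF wo J i1 i2] weq_iff_word_iso by blast
  moreover have "wf_word (restr w J)" using wf_word_restr[OF wf] .
  moreover have "fld (restr w J) \<noteq> {}" using fld_restr[OF wo Js] ne1 by simp
  moreover have "fld (restr w (fld w - J)) \<noteq> {}" using fld_restr[OF wo, of "fld w - J"] ne2 by auto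
  ultimately show ?thesis unfolding proper_suffix_def by blast
qed

lemma le_lex_iff_lex_le: fixes x y :: "(nat,'a::linorder) wd"
  shows "wf_word x \<Longrightarrow> wf_word y \<Longrightarrow> le_lex x y \<longleftrightarrow> lex_le x y"
  using le_lex_iff_prefix_of_or_str_less lex_le_def by blast

lemma lt_lex_iff_lex_less: fixes x y :: "(nat,'a::linorder) wd"
  shows "wf_word x \<Longrightarrow> wf_word y \<Longrightarrow> lt_lex x y \<longleftrightarrow> lex_less x y"
  using le_lex_iff_lex_le lt_lex_def lex_less_def by blast

lemma prime_le_suffix: fixes p r :: "(nat,'a::linorder) wd"
  assumes pp: "prime_word p" and wr: "wf_word r" and e: "weq p r" and J: "ofilter (fst r) J"
    and ne1: "J \<noteq> {}" and ne2: "fld r - J \<noteq> {}"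
  shows "lex_le p (restr r (fld r - J))"
proof -
  have wfp: "wf_word p" using pp unfolding prime_word_def by blast
  have wop: "WO p" using wfp unfolding wf_word_def by blast
  have wor: "WO r" using wr unfolding wf_word_def by blast
  obtain g where g: "word_iso r p g" using weq_sym[OF e] weq_iff_word_iso by blast
  have g': "word_iso (restr r (fld r)) (restr p (fld p)) g" using g by simp
  have Js: "J \<subseteq> fld r" using ofilter_sub[OF J] .
  have t1: "ofilter (fst p) (g ` J)" using ofilter_word_iso_image(1)[OF wor wop ofilter_fld[OF wor] ofilter_fld[OF wop] g' J Js] .
  have gb: "bij_betw g (fld r) (fld p)" using word_iso_bij[OF g] .
  have c1: "g ` J \<noteq> {}" using ne1 by blast
  have im: "g ` (fld r - J) = fld p - g ` J"
  proof -
    have ij: "inj_on g (fld r)" using gb by (simp add: bij_betw_def)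
    have "g ` (fld r - J) = g ` fld r - g ` J" using inj_on_image_set_diff[OF ij _ Js] by blast
    then show ?thesis using gb by (simp add: bij_betw_def)
  qed
  have c2: "fld p - g ` J \<noteq> {}" using ne2 im by blast
  have suffix: "proper_suffix (restr p (fld p - g ` J)) p" using proper_suffix_restr_diff[OF wfp t1 c1 c2] .
  have "le_lex p (restr p (fld p - g ` J))" using pp suffix wf_word_restr[OF wfp] unfolding prime_word_def by blast
  then have l1: "lex_le p (restr p (fld p - g ` J))" using le_lex_iff_lex_le wfp wf_word_restr[OF wfp] by blast
  have "word_iso (restr r (fld r - J)) (restr p (g ` (fld r - J))) g" using word_iso_restr[OF wor wop g] by blast
  then have "weq (restr p (fld p - g ` J)) (restr r (fld r - J))" using im weq_iff_word_iso weq_sym by metis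
  then show ?thesis using lex_le_weq_right[OF wop WO_restr[OF wop] WO_restr[OF wor] l1] by blast
qed

lemma prefix_of_ordLess: assumes wx: "WO x" and wy: "WO y" and p: "prefix_of x y" and n: "\<not> weq x y"
  shows "(fst x, fst y) \<in> ordLess"
proof -
  obtain B where B: "ofilter (fst y) B" "weq x (restr y B)" using p unfolding prefix_of_def by blast
  have "B \<noteq> fld y" using B(2) n by auto
  then have Bl: "B < fld y" using ofilter_sub[OF B(1)] by blast
  have l1: "(Restr (fst y) B, fst y) \<in> ordLess" using ofilter_ordLess[OF wy B(1)] Bl by blast
  obtain g where g: "word_iso x (restr y B) g" using B(2) weq_iff_word_iso by blast
  have "iso (fst x) (Restr (fst y) B) g" unfolding iso_iff2 using word_iso_bij[OF g] word_iso_rel[OF g] by simp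
  then have "(fst x, Restr (fst y) B) \<in> ordIso" unfolding ordIso_def using wx wy Well_order_Restr by blast
  then show ?thesis using l1 ordIso_ordLess_trans by blast
qed

lemma fld_wprod: assumes wu: "\<And>b. b \<in> Field s \<Longrightarrow> WO (u b)"
  shows "fld (wprod s u) = {(b,p). b \<in> Field s \<and> p \<in> fld (u b)}"
proof
  show "fld (wprod s u) \<subseteq> {(b,p). b \<in> Field s \<and> p \<in> fld (u b)}"
    unfolding wprod_def Field_def by auto
next
  show "{(b,p). b \<in> Field s \<and> p \<in> fld (u b)} \<subseteq> fld (wprod s u)"
  proof
    fix c assume "c \<in> {(b,p). b \<in> Field s \<and> p \<in> fld (u b)}"
    then obtain b p where c: "c = (b,p)" "b \<in> Field s" "p \<in> fld (u b)" by blast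
    have "(p,p) \<in> fst (u b)" using Well_order_refl[OF wu[OF c(2)] c(3)] .
    then have "((b,p),(b,p)) \<in> fst (wprod s u)" unfolding wprod_def using c by auto
    then show "c \<in> fld (wprod s u)" using c(1) by (auto intro: FieldI1)
  qed
qed

lemma rel_wprod: "((b,p),(b',p')) \<in> fst (wprod s u) \<longleftrightarrow> b \<in> Field s \<and> b' \<in> Field s
   \<and> p \<in> fld (u b) \<and> p' \<in> fld (u b') \<and> ((b \<noteq> b' \<and> (b,b') \<in> s) \<or> (b = b' \<and> (p,p') \<in> fst (u b)))"
  unfolding wprod_def by auto

lemma snd_wprod: "snd (wprod s u) (b,p) = snd (u b) p" unfolding wprod_def by simp

lemma proper_prefix_lex_less:
  assumes "WO x" "S \<subseteq> fld x" "ofilter (fst (restr x S)) J" "J \<noteq> S"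
  shows "lex_less (restr x J) (restr x S)"
  using prefix_of_restr[OF assms(1-3)] restr_not_weq[OF assms] prefix_of_imp_lex_le
  unfolding lex_less_def by blast

lemma ofilter_restr_eq_below: assumes wo: "WO x" and S: "S \<subseteq> fld x" and B: "ofilter (fst (restr x S)) B"
  and k: "least_outside (fst (restr x S)) B k"
  shows "B = {d \<in> S. (d,k) \<in> fst x \<and> d \<noteq> k}"
proof -
  have fS: "fld (restr x S) = S" using fld_restr[OF wo S] .
  have kS: "k \<in> S" "k \<notin> B" using least_outsideD[OF k] fS by auto
  have BS: "B \<subseteq> S" using ofilter_sub[OF B] fS by simp
  show ?thesis
  proof
    show "B \<subseteq> {d \<in> S. (d,k) \<in> fst x \<and> d \<noteq> k}"
    proof
      fix d assume d: "d \<in> B"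
      have dS: "d \<in> S" using d BS by blast
      have "(d,k) \<in> fst x"
      proof (rule ccontr)
        assume "(d,k) \<notin> fst x"
        then have "(k,d) \<in> fst (restr x S)" using Well_order_total[OF wo] S dS kS(1) by auto
        then show False using ofilter_down[OF B d] kS by blast
      qed
      then show "d \<in> {d \<in> S. (d,k) \<in> fst x \<and> d \<noteq> k}" using dS d kS by auto
    qed
  next
    show "{d \<in> S. (d,k) \<in> fst x \<and> d \<noteq> k} \<subseteq> B"
    proof
      fix d assume d: "d \<in> {d \<in> S. (d,k) \<in> fst x \<and> d \<noteq> k}"
      show "d \<in> B"
      proof (rule ccontr)
        assume "d \<notin> B"
        then have "(k,d) \<in> fst x" using k d fS unfolding least_outside_def by auto
        then show False using d Well_order_antisym[OF wo] by blast
      qed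
    qed
  qed
qed

lemma Well_order_successor:
  assumes wo: "Well_order s" and sd: "(\<sigma>,\<delta>) \<in> s" and dl: "\<delta> \<in> Field s"
  obtains g' where "case g' of None \<Rightarrow> True | Some h \<Rightarrow> h \<in> Field s \<and> (\<sigma>,h) \<in> s \<and> \<sigma> \<noteq> h"
    and "\<And>b. b \<in> Field s \<Longrightarrow> below_bound s g' b \<longleftrightarrow> (b,\<delta>) \<in> s"
proof (cases "\<exists>h \<in> Field s. (\<delta>,h) \<in> s \<and> \<delta> \<noteq> h")
  case False
  have "below_bound s None b \<longleftrightarrow> (b,\<delta>) \<in> s" if "b \<in> Field s" for b
    using False Well_order_total[OF wo that dl] Well_order_refl[OF wo dl] that by (auto simp: below_bound_def)
  then show ?thesis using that[of None] by simp
next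
  case True
  let ?H = "{h \<in> Field s. (\<delta>,h) \<in> s \<and> \<delta> \<noteq> h}"
  obtain h where h: "h \<in> ?H" "\<forall>h'\<in>?H. (h,h') \<in> s"
    using Well_order_least[OF wo, of ?H] True by blast
  have "below_bound s (Some h) b \<longleftrightarrow> (b,\<delta>) \<in> s" if b: "b \<in> Field s" for b
  proof
    assume "below_bound s (Some h) b"
    then have bh: "(b,h) \<in> s" "b \<noteq> h" by (auto simp: below_bound_def)
    show "(b,\<delta>) \<in> s"
    proof (rule ccontr)
      assume "(b,\<delta>) \<notin> s"
      then have "b \<in> ?H" using Well_order_total[OF wo b dl] Well_order_refl[OF wo dl] b by auto
      then show False using h(2) bh Well_order_antisym[OF wo] by blast
    qed
  next
    assume bd: "(b,\<delta>) \<in> s"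
    have "b \<noteq> h" using h(1) Well_order_antisym[OF wo bd] by auto
    then show "below_bound s (Some h) b"
      using h(1) Well_order_trans[OF wo bd] by (auto simp: below_bound_def)
  qed
  moreover have "(\<sigma>,h) \<in> s" "\<sigma> \<noteq> h"
    using h(1) Well_order_trans[OF wo sd] Well_order_antisym[OF wo sd] by auto
  ultimately show ?thesis using that[of "Some h"] h(1) by auto
qed

lemma bij_betw_Sigma_map:
  assumes "\<And>b. b \<in> J \<Longrightarrow> bij_betw (f b) (S b) T"
  shows "bij_betw (\<lambda>(b,p). (b, f b p)) (Sigma J S) (J \<times> T)"
proof -
  have "inj_on (\<lambda>(b,p). (b, f b p)) (Sigma J S)"
    using assms unfolding bij_betw_def inj_on_def by auto
  moreover have "(\<lambda>(b,p). (b, f b p)) ` Sigma J S = J \<times> T"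
    using assms unfolding bij_betw_def by (auto simp: image_iff) (metis imageE)
  ultimately show ?thesis unfolding bij_betw_def by blast
qed

locale factorization =
  fixes x :: "(nat,'a::linorder) wd" and s :: "nat rel" and u :: "nat \<Rightarrow> (nat,'a) wd"
    and phi :: "nat \<Rightarrow> nat \<times> nat"
  assumes wf_x: "wf_word x" and wo_s: "Well_order s" and prime_u: "\<And>b. b \<in> Field s \<Longrightarrow> prime_word (u b)"
    and dense: "dense_nonincr s u" and phi: "word_iso x (wprod s u) phi"
begin

definition idx where "idx d = fst (phi d)"
definition offset where "offset d = snd (phi d)"
definition block where "block b = {d \<in> fld x. idx d = b}"
definition blocks_from where "blocks_from a = {d \<in> fld x. (a, idx d) \<in> s}"
definition blocks_before where "blocks_before g = {d \<in> fld x. (idx d, g) \<in> s \<and> idx d \<noteq> g}"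
definition blocks_upto where "blocks_upto g = {d \<in> fld x. (idx d, g) \<in> s}"
definition block_start where "block_start c \<longleftrightarrow> (\<forall>d \<in> block (idx c). (c,d) \<in> fst x)"

definition segment where "segment a I = blocks_from a \<inter> I"

lemma WO_x: "WO x" using wf_x unfolding wf_word_def by blast
lemma wf_word_u: "b \<in> Field s \<Longrightarrow> wf_word (u b)" using prime_u unfolding prime_word_def by blast
lemma WO_u: "b \<in> Field s \<Longrightarrow> WO (u b)" using wf_word_u unfolding wf_word_def by blast

lemma fld_wprod_u: "fld (wprod s u) = {(b,p). b \<in> Field s \<and> p \<in> fld (u b)}"
  by (rule fld_wprod) (rule WO_u)

lemma idx_offset_in: assumes "d \<in> fld x" shows "idx d \<in> Field s" "offset d \<in> fld (u (idx d))"
proof -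
  have "phi d \<in> fld (wprod s u)" using word_iso_in[OF phi assms] .
  then have "(idx d, offset d) \<in> {(b,p). b \<in> Field s \<and> p \<in> fld (u b)}" unfolding idx_def offset_def fld_wprod_u by simp
  then show "idx d \<in> Field s" "offset d \<in> fld (u (idx d))" by auto
qed

lemma phi_eq: "phi d = (idx d, offset d)" unfolding idx_def offset_def by simp

lemma rel_iff_idx_offset: assumes "d \<in> fld x" "d' \<in> fld x"
  shows "(d,d') \<in> fst x \<longleftrightarrow> (idx d \<noteq> idx d' \<and> (idx d, idx d') \<in> s) \<or> (idx d = idx d' \<and> (offset d, offset d') \<in> fst (u (idx d)))"
proof -
  have "(d,d') \<in> fst x \<longleftrightarrow> (phi d, phi d') \<in> fst (wprod s u)" using word_iso_rel[OF phi assms] .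
  also have "\<dots> \<longleftrightarrow> ((idx d, offset d), (idx d', offset d')) \<in> fst (wprod s u)" by (simp add: phi_eq)
  also have "\<dots> \<longleftrightarrow> (idx d \<noteq> idx d' \<and> (idx d, idx d') \<in> s) \<or> (idx d = idx d' \<and> (offset d, offset d') \<in> fst (u (idx d)))"
    unfolding rel_wprod using idx_offset_in[OF assms(1)] idx_offset_in[OF assms(2)] by auto
  finally show ?thesis .
qed

lemma snd_eq_offset: assumes "d \<in> fld x" shows "snd x d = snd (u (idx d)) (offset d)"
  using word_iso_snd[OF phi assms] by (simp add: phi_eq snd_wprod)

lemma phi_inj: "inj_on phi (fld x)" using word_iso_bij[OF phi] by (simp add: bij_betw_def)

lemma phi_onto:
  assumes "b \<in> Field s" "p \<in> fld (u b)"
  shows "\<exists>d\<in>fld x. idx d = b \<and> offset d = p"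
proof -
  have "(b,p) \<in> fld (wprod s u)" using assms fld_wprod_u by simp
  then have "(b,p) \<in> phi ` fld x" using word_iso_bij[OF phi] by (simp add: bij_betw_def)
  then obtain d where "d \<in> fld x" "phi d = (b,p)" by (metis imageE)
  then show ?thesis by (auto simp: phi_eq)
qed

lemma block_subset: "block b \<subseteq> fld x" unfolding block_def by blast

lemma block_word_iso: assumes b: "b \<in> Field s" shows "word_iso (restr x (block b)) (u b) offset"
proof (rule word_isoI)
  have f: "fld (restr x (block b)) = block b" using fld_restr[OF WO_x block_subset] .
  show "bij_betw offset (fld (restr x (block b))) (fld (u b))"
    unfolding f bij_betw_def
  proof
    show "inj_on offset (block b)"
    proof (rule inj_onI)
      fix d1 d2 assume d: "d1 \<in> block b" "d2 \<in> block b" "offset d1 = offset d2"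
      then have "idx d1 = idx d2" using block_def by simp
      then have "phi d1 = phi d2" using d(3) by (simp add: phi_eq)
      then show "d1 = d2" using inj_onD[OF phi_inj] d block_subset by blast
    qed
  next
    show "offset ` block b = fld (u b)"
    proof
      show "offset ` block b \<subseteq> fld (u b)" using idx_offset_in block_def by auto
    next
      show "fld (u b) \<subseteq> offset ` block b"
      proof
        fix p assume "p \<in> fld (u b)"
        then obtain d where "d \<in> fld x" "idx d = b" "offset d = p" using phi_onto[OF b] by blast
        then show "p \<in> offset ` block b" unfolding block_def by blast
      qed
    qed
  qed
next
  fix d d' assume "d \<in> fld (restr x (block b))" "d' \<in> fld (restr x (block b))"
  then have dd: "d \<in> block b" "d' \<in> block b" using fld_restr[OF WO_x block_subset] by auto
  then have "d \<in> fld x" "d' \<in> fld x" "idx d = b" "idx d' = b" unfolding block_def by auto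
  then have "(d,d') \<in> fst x \<longleftrightarrow> (offset d, offset d') \<in> fst (u b)" using rel_iff_idx_offset by auto
  then show "(d, d') \<in> fst (restr x (block b)) \<longleftrightarrow> (offset d, offset d') \<in> fst (u b)" using dd by auto
next
  fix d assume "d \<in> fld (restr x (block b))"
  then have "d \<in> block b" using fld_restr[OF WO_x block_subset] by auto
  then show "snd (restr x (block b)) d = snd (u b) (offset d)" using snd_eq_offset block_def by auto
qed

lemma weq_block: "b \<in> Field s \<Longrightarrow> weq (restr x (block b)) (u b)" using block_word_iso weq_iff_word_iso by blast

lemma block_nonempty: assumes b: "b \<in> Field s" shows "block b \<noteq> {}"
proof -
  have "fld (u b) \<noteq> {}" using prime_nonempty prime_u[OF b] by blast
  then obtain p where "p \<in> fld (u b)" by blast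
  then obtain d where "d \<in> fld x" "idx d = b" using phi_onto[OF b] by blast
  then show ?thesis unfolding block_def by blast
qed

lemma rel_iff_idx_rel: assumes "d \<in> fld x" "d' \<in> fld x" "idx d \<noteq> idx d'"
  shows "(d,d') \<in> fst x \<longleftrightarrow> (idx d, idx d') \<in> s"
  using rel_iff_idx_offset[OF assms(1,2)] assms(3) by auto

lemma idx_mono: assumes "d \<in> fld x" "d' \<in> fld x" "(d,d') \<in> fst x" shows "(idx d, idx d') \<in> s"
proof (cases "idx d = idx d'")
  case True then show ?thesis using Well_order_refl[OF wo_s] idx_offset_in(1)[OF assms(1)] by simp
next
  case False then show ?thesis using rel_iff_idx_rel assms by blast
qed

lemma rel_if_idx_less: assumes "d \<in> fld x" "d' \<in> fld x" "(idx d, idx d') \<in> s" "idx d \<noteq> idx d'"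
  shows "(d,d') \<in> fst x" "d \<noteq> d'"
  using rel_iff_idx_rel assms by auto

lemma segment_subset: "segment a I \<subseteq> fld x" unfolding segment_def blocks_from_def by blast

lemma ofilter_blocks_before: "ofilter (fst x) (blocks_before g)"
proof (rule ofilterI)
  show "blocks_before g \<subseteq> fld x" unfolding blocks_before_def by blast
next
  fix a b assume a: "a \<in> blocks_before g" and ba: "(b,a) \<in> fst x"
  have af: "a \<in> fld x" and ag: "(idx a, g) \<in> s" "idx a \<noteq> g" using a blocks_before_def by auto
  have bf: "b \<in> fld x" using ba by (simp add: FieldI1)
  have "(idx b, idx a) \<in> s" using idx_mono[OF bf af ba] .
  then have bg: "(idx b, g) \<in> s" using Well_order_trans[OF wo_s _ ag(1)] by blast
  have "idx b \<noteq> g"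
  proof
    assume "idx b = g"
    then have "idx a = g" using Well_order_antisym[OF wo_s ag(1)] \<open>(idx b, idx a) \<in> s\<close> by simp
    then show False using ag(2) by simp
  qed
  then show "b \<in> blocks_before g" using bf bg blocks_before_def by blast
qed

lemma ofilter_blocks_upto: "ofilter (fst x) (blocks_upto g)"
proof (rule ofilterI)
  fix a b assume a: "a \<in> blocks_upto g" and ba: "(b,a) \<in> fst x"
  have b: "b \<in> fld x" using ba by (simp add: FieldI1)
  then have "(idx b, idx a) \<in> s" using idx_mono[OF b _ ba] a blocks_upto_def by blast
  then show "b \<in> blocks_upto g" using b a Well_order_trans[OF wo_s] unfolding blocks_upto_def by blast
qed (auto simp: blocks_upto_def)

lemma ofilter_under: "ofilter (fst x) (under (fst x) k)"
  using wo_rel.under_ofilter[of "fst x"] WO_x unfolding wo_rel_def .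

lemma in_blocks_from: "d \<in> fld x \<Longrightarrow> (a, idx d) \<in> s \<Longrightarrow> d \<in> blocks_from a" unfolding blocks_from_def by blast

lemma block_subset_blocks_from: "a \<in> Field s \<Longrightarrow> block a \<subseteq> blocks_from a"
  unfolding block_def blocks_from_def using Well_order_refl[OF wo_s] by blast

lemma idx_block: "d \<in> block a \<Longrightarrow> idx d = a" unfolding block_def by blast
lemma block_in_fld: "d \<in> block a \<Longrightarrow> d \<in> fld x" unfolding block_def by blast
lemma in_block: "d \<in> fld x \<Longrightarrow> d \<in> block (idx d)" unfolding block_def by blast

lemma wf_word_restr_x: "wf_word (restr x S)" using wf_word_restr[OF wf_x] .
lemma WO_restr_x: "WO (restr x S)" using WO_restr[OF WO_x] .

lemma dense_nonincr_first_change: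
  assumes sg: "\<sigma> \<in> Field s" and dl: "\<delta> \<in> Field s" and sd: "(\<sigma>,\<delta>) \<in> s"
    and nw: "\<not> weq (u \<delta>) (u \<sigma>)"
    and before: "\<And>\<beta>. \<beta> \<in> Field s \<Longrightarrow> (\<sigma>,\<beta>) \<in> s \<Longrightarrow> (\<beta>,\<delta>) \<in> s \<Longrightarrow> \<beta> \<noteq> \<delta> \<Longrightarrow> weq (u \<beta>) (u \<sigma>)"
  shows "lex_less (u \<delta>) (u \<sigma>)"
proof -
  obtain g' where g': "case g' of None \<Rightarrow> True | Some h \<Rightarrow> h \<in> Field s \<and> (\<sigma>,h) \<in> s \<and> \<sigma> \<noteq> h"
    and bb: "\<And>b. b \<in> Field s \<Longrightarrow> below_bound s g' b \<longleftrightarrow> (b,\<delta>) \<in> s"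
    using Well_order_successor[OF wo_s sd dl] by blast
  have D: "(\<forall>b \<in> Field s. (\<sigma>, b) \<in> s \<and> below_bound s g' b \<longrightarrow> weq (u b) (u \<sigma>))
       \<or> (\<exists>b \<in> Field s. \<exists>b' \<in> Field s. (\<sigma>, b) \<in> s \<and> (b, b') \<in> s \<and> b \<noteq> b'
            \<and> below_bound s g' b' \<and> lt_lex (u b') (u b))"
    using dense sg g' unfolding dense_nonincr_def by blast
  have "\<not> (\<forall>b \<in> Field s. (\<sigma>, b) \<in> s \<and> below_bound s g' b \<longrightarrow> weq (u b) (u \<sigma>))"
    using dl sd bb[OF dl] Well_order_refl[OF wo_s dl] nw by blast
  then obtain b b' where b: "b \<in> Field s" "b' \<in> Field s" "(\<sigma>, b) \<in> s" "(b, b') \<in> s" "b \<noteq> b'"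
      "below_bound s g' b'" "lt_lex (u b') (u b)" using D by blast
  have b'd: "(b',\<delta>) \<in> s" using bb[OF b(2)] b(6) by blast
  have bd: "(b,\<delta>) \<in> s" "b \<noteq> \<delta>"
    using Well_order_trans[OF wo_s b(4) b'd] Well_order_antisym[OF wo_s b(4)] b'd b(5) by auto
  have wb: "weq (u b) (u \<sigma>)" using before[OF b(1) b(3) bd] .
  have ltb: "lex_less (u b') (u b)" using lt_lex_iff_lex_less wf_word_u b(1,2) b(7) by blast
  have "b' = \<delta>"
  proof (rule ccontr)
    assume "b' \<noteq> \<delta>"
    then have "weq (u b') (u \<sigma>)" using before[OF b(2) Well_order_trans[OF wo_s b(3) b(4)] b'd] by blast
    then have "weq (u b') (u b)" using wb weq_sym weq_trans by blast
    then show False using ltb unfolding lex_less_def by blast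
  qed
  then show ?thesis
    using ltb lex_less_le_trans[OF WO_u[OF dl] WO_u[OF b(1)] WO_u[OF sg]] weq_imp_lex_le[OF wb WO_u[OF sg]]
    by blast
qed

lemma first_change:
  assumes sg: "\<sigma> \<in> Field s" and gs: "\<gamma> \<in> Field s" and sgm: "(\<sigma>,\<gamma>) \<in> s" and nw: "\<not> weq (u \<gamma>) (u \<sigma>)"
  obtains \<delta> where "\<delta> \<in> Field s" "(\<sigma>,\<delta>) \<in> s" "(\<delta>,\<gamma>) \<in> s" "\<delta> \<noteq> \<sigma>" "lex_less (u \<delta>) (u \<sigma>)"
proof -
  let ?D = "{\<delta> \<in> Field s. (\<sigma>,\<delta>) \<in> s \<and> (\<delta>,\<gamma>) \<in> s \<and> \<not> weq (u \<delta>) (u \<sigma>)}"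
  have "?D \<subseteq> Field s" "?D \<noteq> {}" using gs sgm nw Well_order_refl[OF wo_s gs] by auto
  then obtain \<delta> where \<delta>: "\<delta> \<in> ?D" "\<forall>\<delta>'\<in>?D. (\<delta>,\<delta>') \<in> s" using Well_order_least[OF wo_s] by meson
  have before: "weq (u \<beta>) (u \<sigma>)" if \<beta>: "\<beta> \<in> Field s" "(\<sigma>,\<beta>) \<in> s" "(\<beta>,\<delta>) \<in> s" "\<beta> \<noteq> \<delta>" for \<beta>
  proof (rule ccontr)
    assume "\<not> weq (u \<beta>) (u \<sigma>)"
    moreover have "(\<beta>,\<gamma>) \<in> s" using Well_order_trans[OF wo_s \<beta>(3)] \<delta>(1) by blast
    ultimately have "(\<delta>,\<beta>) \<in> s" using \<delta>(2) \<beta>(1,2) by blast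
    then show False using Well_order_antisym[OF wo_s \<beta>(3)] \<beta>(4) by blast
  qed
  have "\<delta> \<noteq> \<sigma>" using \<delta>(1) weq_refl by blast
  moreover have "lex_less (u \<delta>) (u \<sigma>)" using dense_nonincr_first_change[OF sg _ _ _ before] \<delta>(1) by blast
  ultimately show ?thesis using that \<delta>(1) by blast
qed

lemma weq_power:
  assumes Jx: "Jx \<subseteq> Field s" and wy: "WO y" and eq: "\<And>g. g \<in> Jx \<Longrightarrow> weq (u g) y"
  shows "weq (restr x {d \<in> fld x. idx d \<in> Jx}) (wprod (Restr s Jx) (\<lambda>_. y))"
proof -
  define psi where "psi g = (SOME f. word_iso (u g) y f)" for g
  have psi: "\<And>g. g \<in> Jx \<Longrightarrow> word_iso (u g) y (psi g)"
    unfolding psi_def using eq weq_iff_word_iso by (metis someI_ex)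
  define E where "E = {d \<in> fld x. idx d \<in> Jx}"
  let ?k = "\<lambda>(b,p). (b, psi b p)"
  have FJ: "Field (Restr s Jx) = Jx" using Field_Restr_refl[OF Well_order_Refl[OF wo_s] Jx] .
  have fW: "fld (wprod (Restr s Jx) (\<lambda>_. y)) = Jx \<times> fld y"
    using fld_wprod[where s = "Restr s Jx" and u = "\<lambda>_. y"] wy FJ by auto
  have inE: "idx d \<in> Jx \<and> offset d \<in> fld (u (idx d)) \<and> psi (idx d) (offset d) \<in> fld y" if d: "d \<in> E" for d
  proof -
    have "d \<in> fld x" "idx d \<in> Jx" using d unfolding E_def by auto
    then show ?thesis using idx_offset_in(2) word_iso_in[OF psi[of "idx d"]] by blast
  qed
  have phiE: "phi ` E = Sigma Jx (\<lambda>b. fld (u b))"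
  proof
    show "phi ` E \<subseteq> Sigma Jx (\<lambda>b. fld (u b))" using inE by (auto simp: phi_eq)
    show "Sigma Jx (\<lambda>b. fld (u b)) \<subseteq> phi ` E"
    proof (clarify)
      fix b q assume "b \<in> Jx" "q \<in> fld (u b)"
      then obtain d where "d \<in> fld x" "idx d = b" "offset d = q" using phi_onto Jx by blast
      then have "d \<in> E" "phi d = (b,q)" using \<open>b \<in> Jx\<close> unfolding E_def by (auto simp: phi_eq)
      then show "(b,q) \<in> phi ` E" by force
    qed
  qed
  have "word_iso (restr x E) (wprod (Restr s Jx) (\<lambda>_. y)) (?k \<circ> phi)"
  proof (rule word_iso_onto_part[OF WO_x phi])
    show "E \<subseteq> fld x" unfolding E_def by blast
    show "bij_betw ?k (phi ` E) (fld (wprod (Restr s Jx) (\<lambda>_. y)))"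
      unfolding phiE fW by (rule bij_betw_Sigma_map) (rule word_iso_bij[OF psi])
  next
    fix p q assume pq: "p \<in> E" "q \<in> E"
    note p = inE[OF pq(1)] and q = inE[OF pq(2)]
    show "(phi p, phi q) \<in> fst (wprod s u) \<longleftrightarrow> (?k (phi p), ?k (phi q)) \<in> fst (wprod (Restr s Jx) (\<lambda>_. y))"
    proof (cases "idx p = idx q")
      case True
      then show ?thesis
        using word_iso_rel[OF psi, of "idx p" "offset p" "offset q"] p q Jx by (auto simp: phi_eq rel_wprod FJ)
    next
      case False
      then show ?thesis using p q Jx by (auto simp: phi_eq rel_wprod FJ)
    qed
  next
    fix p assume "p \<in> E"
    then show "snd (wprod s u) (phi p) = snd (wprod (Restr s Jx) (\<lambda>_. y)) (?k (phi p))"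
      using word_iso_snd[OF psi, of "idx p" "offset p"] inE by (simp add: phi_eq snd_wprod)
  qed
  then show ?thesis unfolding E_def weq_iff_word_iso by blast
qed

lemma block_ofilter_segment:
  assumes "block \<sigma> \<subseteq> segment \<sigma> I"
  shows "ofilter (fst (restr x (segment \<sigma> I))) (block \<sigma>)"
proof (rule ofilter_restrI[OF WO_x segment_subset assms])
  fix d d' assume d: "d \<in> block \<sigma>" and d': "d' \<in> segment \<sigma> I" and dd: "(d',d) \<in> fst x"
  have df: "d \<in> fld x" using block_in_fld[OF d] .
  have d'f: "d' \<in> fld x" using d' segment_subset by blast
  have "(idx d', \<sigma>) \<in> s" using idx_mono[OF d'f df dd] idx_block[OF d] by simp
  moreover have "(\<sigma>, idx d') \<in> s" using d' unfolding segment_def blocks_from_def by blast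
  ultimately have "idx d' = \<sigma>" using Well_order_antisym[OF wo_s] by blast
  then show "d' \<in> block \<sigma>" using in_block[OF d'f] by simp
qed

lemma block_subset_segment: assumes I: "ofilter (fst x) I" and d: "d \<in> segment \<sigma> I" and sg: "(\<sigma>,\<gamma>) \<in> s"
  and gd: "(\<gamma>, idx d) \<in> s" and ne: "\<gamma> \<noteq> idx d"
  shows "block \<gamma> \<subseteq> segment \<sigma> I"
proof
  fix e assume e: "e \<in> block \<gamma>"
  have ef: "e \<in> fld x" using block_in_fld[OF e] .
  have df: "d \<in> fld x" using d segment_subset by blast
  have eT: "e \<in> blocks_from \<sigma>" using in_blocks_from[OF ef] sg idx_block[OF e] by simp
  have "(e,d) \<in> fst x" using rel_if_idx_less(1)[OF ef df] idx_block[OF e] gd ne by simp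
  then have "e \<in> I" using ofilter_down[OF I] d unfolding segment_def by blast
  then show "e \<in> segment \<sigma> I" using eT segment_def by blast
qed

lemma segment_diff_blocks_before:
  assumes dl: "\<delta> \<in> Field s" and sd: "(\<sigma>,\<delta>) \<in> s"
  shows "segment \<sigma> I - blocks_before \<delta> = segment \<delta> I"
proof
  show "segment \<sigma> I - blocks_before \<delta> \<subseteq> segment \<delta> I"
  proof
    fix d assume d: "d \<in> segment \<sigma> I - blocks_before \<delta>"
    have df: "d \<in> fld x" using d segment_subset by blast
    have nl: "\<not> ((idx d, \<delta>) \<in> s \<and> idx d \<noteq> \<delta>)" using d df blocks_before_def by blast
    have "(\<delta>, idx d) \<in> s"
    proof (cases "idx d = \<delta>")
      case True then show ?thesis using Well_order_refl[OF wo_s dl] by simp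
    next
      case False then show ?thesis using nl Well_order_total[OF wo_s dl idx_offset_in(1)[OF df]] by blast
    qed
    then show "d \<in> segment \<delta> I" using d df unfolding segment_def blocks_from_def by blast
  qed
next
  show "segment \<delta> I \<subseteq> segment \<sigma> I - blocks_before \<delta>"
  proof
    fix d assume d: "d \<in> segment \<delta> I"
    have df: "d \<in> fld x" using d segment_subset by blast
    have di: "(\<delta>, idx d) \<in> s" using d unfolding segment_def blocks_from_def by blast
    have "(\<sigma>, idx d) \<in> s" using Well_order_trans[OF wo_s sd di] .
    moreover have "d \<notin> blocks_before \<delta>" using di Well_order_antisym[OF wo_s] blocks_before_def by blast
    ultimately show "d \<in> segment \<sigma> I - blocks_before \<delta>" using d df unfolding segment_def blocks_from_def by blast
  qed
qed

lemma ofilter_restr_blocks_before: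
  assumes S: "S \<subseteq> fld x"
  shows "ofilter (fst (restr x S)) (S \<inter> blocks_before \<gamma>)"
proof (rule ofilter_restrI[OF WO_x S])
  show "S \<inter> blocks_before \<gamma> \<subseteq> S" by blast
next
  fix d d' assume "d \<in> S \<inter> blocks_before \<gamma>" "d' \<in> S" "(d',d) \<in> fst x"
  then show "d' \<in> S \<inter> blocks_before \<gamma>" using ofilter_down[OF ofilter_blocks_before] by blast
qed

lemma ofilter_restr_block_Int:
  assumes I: "ofilter (fst x) I'"
  shows "ofilter (fst (restr x (block \<gamma>))) (block \<gamma> \<inter> I')"
proof (rule ofilter_restrI[OF WO_x block_subset])
  show "block \<gamma> \<inter> I' \<subseteq> block \<gamma>" by blast
next
  fix d d' assume "d \<in> block \<gamma> \<inter> I'" "d' \<in> block \<gamma>" "(d',d) \<in> fst x"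
  then show "d' \<in> block \<gamma> \<inter> I'" using ofilter_down[OF I] by blast
qed

lemma block_Int_subset_blocks_before:
  assumes "(\<sigma>,\<gamma>) \<in> s" "\<sigma> \<noteq> \<gamma>"
  shows "block \<sigma> \<inter> S \<subseteq> S \<inter> blocks_before \<gamma>"
  using assms unfolding blocks_before_def block_def by auto

lemma segment_cases:
  assumes dl: "\<delta> \<in> Field s" and I: "ofilter (fst x) I"
  shows "block \<delta> \<subseteq> segment \<delta> I \<or> (segment \<delta> I = block \<delta> \<inter> I \<and> \<not> block \<delta> \<subseteq> I)"
proof (cases "\<exists>d \<in> segment \<delta> I. idx d \<noteq> \<delta>")
  case True
  then obtain d where d: "d \<in> segment \<delta> I" "idx d \<noteq> \<delta>" by blast
  then have "(\<delta>, idx d) \<in> s" unfolding segment_def blocks_from_def by blast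
  then show ?thesis using block_subset_segment[OF I d(1) Well_order_refl[OF wo_s dl]] d(2) by blast
next
  case False
  have "segment \<delta> I \<subseteq> block \<delta> \<inter> I"
  proof
    fix d assume "d \<in> segment \<delta> I"
    then show "d \<in> block \<delta> \<inter> I" using False in_block[of d] segment_subset unfolding segment_def by force
  qed
  moreover have "block \<delta> \<inter> I \<subseteq> segment \<delta> I"
    using block_subset_blocks_from[OF dl] unfolding segment_def by blast
  ultimately have "segment \<delta> I = block \<delta> \<inter> I" by (rule subset_antisym)
  then show ?thesis by blast
qed

lemma lex_le_block_of_ofilter:
  assumes "\<delta> \<in> Field s" "ofilter (fst (restr x (block \<delta>))) J"
  shows "lex_le (restr x J) (u \<delta>)"
  using lex_le_weq_right[OF WO_restr_x WO_restr_x WO_u[OF assms(1)] _ weq_block[OF assms(1)]]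
    prefix_of_imp_lex_le[OF prefix_of_restr[OF WO_x block_subset assms(2)]] by blast

definition bounds_segments :: "(nat,'a) wd \<Rightarrow> bool" where
  "bounds_segments p \<longleftrightarrow> (\<forall>\<sigma> I. \<sigma> \<in> Field s \<longrightarrow> prefix_of (u \<sigma>) p \<longrightarrow> \<not> weq (u \<sigma>) p
     \<longrightarrow> ofilter (fst x) I \<longrightarrow> lex_le (restr x (segment \<sigma> I)) p)"

lemma suffix_below_later_factor:
  assumes bounds: "bounds_segments (u \<sigma>)" and sg: "\<sigma> \<in> Field s"
    and pre: "prefix_of (u \<sigma>) p" and nw: "\<not> weq (u \<sigma>) p" and wp: "WO p"
    and dl: "\<delta> \<in> Field s" and ltd: "lex_less (u \<delta>) (u \<sigma>)" and I: "ofilter (fst x) I"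
    and wq: "WO q" and pq: "lex_le p q" and q_seg: "lex_le q (restr x (segment \<delta> I))"
    and q_block: "prefix_of (restr x (block \<delta>)) q \<or> lex_le q (u \<delta>)"
  shows False
proof -
  have wu: "WO (u \<sigma>)" using WO_u[OF sg] .
  have sp: "lex_less (u \<sigma>) p" using prefix_of_imp_lex_le[OF pre] nw unfolding lex_less_def by blast
  have "lex_less q p"
  proof (cases "str_less (u \<delta>) (u \<sigma>) \<and> prefix_of (restr x (block \<delta>)) q")
    case True
    have "str_less (restr x (block \<delta>)) (u \<sigma>)"
      using str_less_weq_left[OF WO_u[OF dl] WO_restr_x wu _ weq_sym[OF weq_block[OF dl]]] True by blast
    then have "str_less q (u \<sigma>)" using str_less_prefix_of_left[OF WO_restr_x wq wu] True by blast
    then have sq: "str_less q p" using str_less_prefix_of_right[OF wq wu wp _ pre] by blast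
    have "\<not> weq q p"
      using str_less_prefix_of_contra[OF wq wp sq] weq_imp_prefix_of[OF weq_sym wq] by blast
    then show ?thesis using str_less_imp_lex_le[OF sq] unfolding lex_less_def by blast
  next
    case False
    have "lex_le q (u \<sigma>)"
    proof (cases "prefix_of (restr x (block \<delta>)) q")
      case True
      then have "prefix_of (u \<delta>) (u \<sigma>)" using False ltd unfolding lex_less_def lex_le_def by blast
      then have "lex_le (restr x (segment \<delta> I)) (u \<sigma>)"
        using bounds dl ltd I unfolding bounds_segments_def lex_less_def by blast
      then show ?thesis using lex_le_trans[OF wq WO_restr_x wu q_seg] by blast
    next
      case False
      then show ?thesis using q_block lex_le_trans[OF wq WO_u[OF dl] wu] ltd unfolding lex_less_def by blast
    qed
    then show ?thesis using lex_le_less_trans[OF wq wu wp _ sp] by blast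
  qed
  then show False using lex_less_not_le[OF wq wp] pq by blast
qed

lemma segment_prefix_cases:
  assumes dl: "\<delta> \<in> Field s" and I: "ofilter (fst x) I"
  shows "prefix_of (restr x (block \<delta>)) (restr x (segment \<delta> I)) \<or> lex_le (restr x (segment \<delta> I)) (u \<delta>)"
  using segment_cases[OF dl I] prefix_of_restr[OF WO_x segment_subset block_ofilter_segment]
    lex_le_block_of_ofilter[OF dl ofilter_restr_block_Int[OF I]] by metis

lemma segment_lex_less_factor:
  assumes dl: "\<delta> \<in> Field s" and I: "ofilter (fst x) I" and out: "\<not> block \<delta> \<subseteq> I"
  shows "lex_less (restr x (segment \<delta> I)) (u \<delta>)"
proof -
  have seg: "segment \<delta> I = block \<delta> \<inter> I" using segment_cases[OF dl I] out unfolding segment_def by blast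
  have "lex_less (restr x (block \<delta> \<inter> I)) (restr x (block \<delta>))"
    using proper_prefix_lex_less[OF WO_x block_subset ofilter_restr_block_Int[OF I]] out by blast
  then show ?thesis
    using seg lex_less_le_trans[OF WO_restr_x WO_restr_x WO_u[OF dl]] weq_imp_lex_le[OF weq_block[OF dl] WO_u[OF dl]]
    by metis
qed

lemma prime_le_later_segment:
  fixes p :: "(nat,'a) wd"
  assumes pp: "prime_word p" and sg: "\<sigma> \<in> Field s" and sub: "block \<sigma> \<subseteq> segment \<sigma> I"
    and e: "weq p (restr x (segment \<sigma> I))"
    and gs: "\<gamma> \<in> Field s" and sgm: "(\<sigma>,\<gamma>) \<in> s" "\<sigma> \<noteq> \<gamma>" and meet: "block \<gamma> \<inter> segment \<sigma> I \<noteq> {}"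
  shows "lex_le p (restr x (segment \<gamma> I))"
proof -
  let ?S = "segment \<sigma> I" and ?P = "segment \<sigma> I \<inter> blocks_before \<gamma>"
  have S: "?S \<subseteq> fld x" by (rule segment_subset)
  have fS: "fld (restr x ?S) = ?S" using fld_restr[OF WO_x S] .
  have "block \<sigma> \<subseteq> ?P" using block_Int_subset_blocks_before[OF sgm] sub by blast
  then have "?P \<noteq> {}" using block_nonempty[OF sg] by blast
  moreover have "fld (restr x ?S) - ?P \<noteq> {}"
    using meet fS idx_block unfolding blocks_before_def by blast
  ultimately have "lex_le p (restr (restr x ?S) (fld (restr x ?S) - ?P))"
    using prime_le_suffix[OF pp wf_word_restr_x e ofilter_restr_blocks_before[OF S]] by blast
  moreover have "?S - ?P = segment \<gamma> I" using segment_diff_blocks_before[OF gs sgm(1)] by blast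
  ultimately show ?thesis using restr_restr_diff[OF WO_x S] by simp
qed

lemma segment_power_eq_block:
  fixes p :: "(nat,'a) wd"
  assumes pp: "prime_word p" and sg: "\<sigma> \<in> Field s" and sub: "block \<sigma> \<subseteq> segment \<sigma> I"
    and e: "weq p (restr x (segment \<sigma> I))"
    and later: "\<And>\<gamma>. \<gamma> \<in> Field s \<Longrightarrow> (\<sigma>,\<gamma>) \<in> s \<Longrightarrow> \<sigma> \<noteq> \<gamma> \<Longrightarrow> block \<gamma> \<inter> segment \<sigma> I \<noteq> {}
      \<Longrightarrow> block \<gamma> \<subseteq> segment \<sigma> I \<and> weq (u \<gamma>) (u \<sigma>)"
  shows "segment \<sigma> I = block \<sigma>"
proof -
  define J where "J = {\<gamma> \<in> Field s. (\<sigma>,\<gamma>) \<in> s \<and> block \<gamma> \<inter> segment \<sigma> I \<noteq> {}}"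
  have J: "J \<subseteq> Field s" and \<sigma>J: "\<sigma> \<in> J"
    using sg sub block_nonempty[OF sg] Well_order_refl[OF wo_s sg] unfolding J_def by auto
  have seg: "segment \<sigma> I = {d \<in> fld x. idx d \<in> J}"
  proof
    show "segment \<sigma> I \<subseteq> {d \<in> fld x. idx d \<in> J}"
      using segment_subset in_block idx_offset_in(1) unfolding J_def segment_def blocks_from_def by blast
    show "{d \<in> fld x. idx d \<in> J} \<subseteq> segment \<sigma> I"
      using later sub in_block unfolding J_def by blast
  qed
  have "weq (u \<gamma>) (u \<sigma>)" if "\<gamma> \<in> J" for \<gamma> using that later weq_refl unfolding J_def by blast
  then have "weq p (wprod (Restr s J) (\<lambda>_. u \<sigma>))"
    using weq_trans[OF e] weq_power[OF J WO_u[OF sg]] seg by simp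
  then obtain b where "Field (Restr s J) = {b}"
    using pp wf_word_u[OF sg] Well_order_Restr[OF wo_s] unfolding prime_word_def primitive_def by blast
  then have "J = {\<sigma>}" using Field_Restr_refl[OF Well_order_Refl[OF wo_s] J] \<sigma>J by simp
  then show ?thesis using seg unfolding block_def by blast
qed

lemma factor_proper_prefix:
  assumes sg: "\<sigma> \<in> Field s" and sub: "block \<sigma> \<subseteq> segment \<sigma> I"
    and e: "weq p (restr x (segment \<sigma> I))" and ne: "segment \<sigma> I \<noteq> block \<sigma>" and wp: "WO p"
  shows "prefix_of (u \<sigma>) p" and "\<not> weq (u \<sigma>) p"
proof -
  have S: "segment \<sigma> I \<subseteq> fld x" by (rule segment_subset)
  note bof = block_ofilter_segment[OF sub]
  have "prefix_of (u \<sigma>) (restr x (segment \<sigma> I))"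
    using prefix_of_weq_left[OF weq_sym[OF weq_block[OF sg]] prefix_of_restr[OF WO_x S bof]] .
  then show "prefix_of (u \<sigma>) p" using prefix_of_weq_right[OF WO_restr_x wp _ weq_sym[OF e]] by blast
  show "\<not> weq (u \<sigma>) p"
  proof
    assume "weq (u \<sigma>) p"
    then have "weq (restr x (block \<sigma>)) (restr x (segment \<sigma> I))"
      using weq_trans[OF weq_trans[OF weq_block[OF sg]] e] by blast
    then show False using restr_not_weq[OF WO_x S bof] ne by blast
  qed
qed

lemma segment_eq_block_step:
  fixes p :: "(nat,'a) wd"
  assumes bounds: "bounds_segments (u \<sigma>)" and pp: "prime_word p" and sg: "\<sigma> \<in> Field s"
    and I: "ofilter (fst x) I" and sub: "block \<sigma> \<subseteq> segment \<sigma> I" and e: "weq p (restr x (segment \<sigma> I))"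
  shows "segment \<sigma> I = block \<sigma>"
proof (rule ccontr)
  assume ne: "segment \<sigma> I \<noteq> block \<sigma>"
  define S where "S = segment \<sigma> I"
  have wp: "WO p" using pp unfolding prime_word_def wf_word_def by blast
  have wu: "WO (u \<sigma>)" using WO_u[OF sg] .
  have pre: "prefix_of (u \<sigma>) p" and nw: "\<not> weq (u \<sigma>) p"
    using factor_proper_prefix[OF sg sub e ne wp] by auto
  have later: "lex_le p (restr x (segment \<gamma> I))"
    if "\<gamma> \<in> Field s" "(\<sigma>,\<gamma>) \<in> s" "\<sigma> \<noteq> \<gamma>" "block \<gamma> \<inter> S \<noteq> {}" for \<gamma>
    using prime_le_later_segment[OF pp sg sub e that(1-3)] that(4) S_def by blast
  define J where "J = {\<gamma> \<in> Field s. (\<sigma>,\<gamma>) \<in> s \<and> \<sigma> \<noteq> \<gamma> \<and> block \<gamma> \<inter> S \<noteq> {}}"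
  show False
  proof (cases "\<exists>\<gamma>\<in>J. \<not> weq (u \<gamma>) (u \<sigma>)")
    case True
    then obtain \<gamma> where \<gamma>: "\<gamma> \<in> J" "\<not> weq (u \<gamma>) (u \<sigma>)" by blast
    obtain \<delta> where \<delta>: "\<delta> \<in> Field s" "(\<sigma>,\<delta>) \<in> s" "(\<delta>,\<gamma>) \<in> s" "\<delta> \<noteq> \<sigma>" "lex_less (u \<delta>) (u \<sigma>)"
      using first_change[OF sg _ _ \<gamma>(2)] \<gamma>(1) J_def by blast
    have "block \<delta> \<inter> S \<noteq> {}"
    proof (cases "\<delta> = \<gamma>")
      case False
      obtain d where d: "d \<in> block \<gamma>" "d \<in> S" using \<gamma>(1) J_def by blast
      then have "block \<delta> \<subseteq> S"
        using block_subset_segment[OF I _ \<delta>(2), of d] idx_block \<delta>(3) False S_def by metis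
      then show ?thesis using block_nonempty[OF \<delta>(1)] by blast
    qed (use \<gamma>(1) J_def in blast)
    then have "lex_le p (restr x (segment \<delta> I))" using later \<delta>(1,2,4) by blast
    then show False
      using suffix_below_later_factor[OF bounds sg pre nw wp \<delta>(1) \<delta>(5) I WO_restr_x]
        weq_imp_lex_le[OF weq_refl WO_restr_x] segment_prefix_cases[OF \<delta>(1) I] by blast
  next
    case False
    then have same: "\<And>\<gamma>. \<gamma> \<in> J \<Longrightarrow> weq (u \<gamma>) (u \<sigma>)" by blast
    show False
    proof (cases "\<exists>\<gamma>\<in>J. \<not> block \<gamma> \<subseteq> S")
      case True
      then obtain \<gamma> where \<gamma>: "\<gamma> \<in> J" "\<not> block \<gamma> \<subseteq> S" by blast
      have "block \<gamma> \<subseteq> blocks_from \<sigma>" using \<gamma>(1) J_def unfolding block_def blocks_from_def by blast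
      then have "\<not> block \<gamma> \<subseteq> I" using \<gamma>(2) S_def segment_def by blast
      then have "lex_less (restr x (segment \<gamma> I)) (u \<gamma>)" using segment_lex_less_factor[OF _ I] \<gamma>(1) J_def by blast
      then have "lex_less (restr x (segment \<gamma> I)) p"
        using lex_less_le_trans[OF WO_restr_x _ wu _ weq_imp_lex_le[OF same[OF \<gamma>(1)] wu]] WO_u \<gamma>(1) J_def
          lex_less_le_trans[OF WO_restr_x wu wp _ prefix_of_imp_lex_le[OF pre]] by blast
      then show False using lex_less_not_le[OF WO_restr_x wp] later \<gamma>(1) J_def by blast
    next
      case False
      then show False using segment_power_eq_block[OF pp sg sub e] same ne J_def S_def by blast
    qed
  qed
qed

lemma lex_less_at_segmentD:
  assumes v: "lex_less_at p (restr x (segment \<sigma> I)) B A g k"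
  shows "k \<in> segment \<sigma> I" and "B = {d \<in> segment \<sigma> I. (d,k) \<in> fst x \<and> d \<noteq> k}"
proof -
  have B: "ofilter (fst (restr x (segment \<sigma> I))) B" "least_outside (fst (restr x (segment \<sigma> I))) B k"
    using v unfolding lex_less_at_def by auto
  show "k \<in> segment \<sigma> I" using least_outsideD[OF B(2)] fld_restr[OF WO_x segment_subset] by auto
  show "B = {d \<in> segment \<sigma> I. (d,k) \<in> fst x \<and> d \<noteq> k}"
    using ofilter_restr_eq_below[OF WO_x segment_subset B] .
qed

lemma witness_beyond_first_block:
  assumes sg: "\<sigma> \<in> Field s" and I: "ofilter (fst x) I" and pre: "prefix_of (u \<sigma>) p" and wp: "WO p"
    and v: "lex_less_at p (restr x (segment \<sigma> I)) B A g k"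
  shows "idx k \<noteq> \<sigma>"
proof
  assume k\<sigma>: "idx k = \<sigma>"
  define S where "S = segment \<sigma> I"
  have S: "S \<subseteq> fld x" using segment_subset S_def by simp
  have kS: "k \<in> S" and Bc: "B = {d \<in> S. (d,k) \<in> fst x \<and> d \<noteq> k}"
    using lex_less_at_segmentD[OF v] S_def by auto
  have kx: "k \<in> fld x" and kI: "k \<in> I" using kS S unfolding S_def segment_def by auto
  have "B \<union> {k} \<subseteq> segment \<sigma> I" using Bc kS S_def by blast
  then have "lex_less p (restr x (B \<union> {k}))"
    using lex_less_at_imp_lex_less[OF wp WO_restr_x v] by (simp add: restr_restr_subset)
  moreover have "B \<union> {k} \<subseteq> block \<sigma>"
  proof
    fix d assume d: "d \<in> B \<union> {k}"
    then have dx: "d \<in> fld x" and dk: "(d,k) \<in> fst x" and "(\<sigma>, idx d) \<in> s"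
      using Bc kS kx S Well_order_refl[OF WO_x kx] k\<sigma> idx_offset_in(1)[OF kx] Well_order_refl[OF wo_s]
      unfolding S_def segment_def blocks_from_def by auto
    then have "idx d = \<sigma>" using idx_mono[OF dx kx dk] k\<sigma> Well_order_antisym[OF wo_s] by blast
    then show "d \<in> block \<sigma>" using in_block[OF dx] by simp
  qed
  then have "ofilter (fst (restr x (block \<sigma>))) (B \<union> {k})"
  proof (rule ofilter_restrI[OF WO_x block_subset])
    fix d d' assume d: "d \<in> B \<union> {k}" and d': "d' \<in> block \<sigma>" and dd: "(d',d) \<in> fst x"
    have "(d,k) \<in> fst x" using d Bc Well_order_refl[OF WO_x kx] by auto
    then have d'k: "(d',k) \<in> fst x" using Well_order_trans[OF WO_x dd] by blast
    then have "d' \<in> S"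
      using ofilter_down[OF I kI] block_subset_blocks_from[OF sg] d' unfolding S_def segment_def by blast
    then show "d' \<in> B \<union> {k}" using Bc d'k by blast
  qed
  then have "lex_le (restr x (B \<union> {k})) p"
    using lex_le_block_of_ofilter[OF sg] lex_le_trans[OF WO_restr_x WO_u[OF sg] wp _ prefix_of_imp_lex_le[OF pre]]
    by blast
  ultimately show False using lex_less_not_le[OF wp WO_restr_x] by blast
qed

lemma segment_after_witness:
  assumes Bc: "B = {d \<in> segment \<sigma> I. (d,k) \<in> fst x \<and> d \<noteq> k}" and kS: "k \<in> segment \<sigma> I"
    and gs: "\<gamma> \<in> Field s" and sgm: "(\<sigma>,\<gamma>) \<in> s" and gk: "(\<gamma>, idx k) \<in> s"
  shows "(B - segment \<sigma> I \<inter> blocks_before \<gamma>) \<union> {k} = segment \<gamma> (I \<inter> under (fst x) k)"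
proof
  have kx: "k \<in> fld x" using kS segment_subset by blast
  show "(B - segment \<sigma> I \<inter> blocks_before \<gamma>) \<union> {k} \<subseteq> segment \<gamma> (I \<inter> under (fst x) k)"
  proof
    fix d assume d: "d \<in> (B - segment \<sigma> I \<inter> blocks_before \<gamma>) \<union> {k}"
    then have dS: "d \<in> segment \<sigma> I" and dk: "(d,k) \<in> fst x"
      using Bc kS Well_order_refl[OF WO_x kx] by auto
    have dx: "d \<in> fld x" using dS segment_subset by blast
    have "(\<gamma>, idx d) \<in> s"
    proof (cases "d = k")
      case False
      then have "d \<notin> blocks_before \<gamma>" using d dS by blast
      then show ?thesis
        using Well_order_total[OF wo_s gs idx_offset_in(1)[OF dx]] Well_order_refl[OF wo_s gs] dx
        unfolding blocks_before_def by blast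
    qed (use gk in simp)
    then show "d \<in> segment \<gamma> (I \<inter> under (fst x) k)"
      using dS dk dx unfolding segment_def blocks_from_def under_def by blast
  qed
next
  show "segment \<gamma> (I \<inter> under (fst x) k) \<subseteq> (B - segment \<sigma> I \<inter> blocks_before \<gamma>) \<union> {k}"
  proof
    fix d assume d: "d \<in> segment \<gamma> (I \<inter> under (fst x) k)"
    then have dx: "d \<in> fld x" and dg: "(\<gamma>, idx d) \<in> s" and dk: "(d,k) \<in> fst x" and "d \<in> I"
      unfolding segment_def blocks_from_def under_def by auto
    then have "d \<in> segment \<sigma> I"
      using Well_order_trans[OF wo_s sgm dg] unfolding segment_def blocks_from_def by blast
    moreover have "d \<notin> blocks_before \<gamma>" using dg Well_order_antisym[OF wo_s] blocks_before_def by blast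
    ultimately show "d \<in> (B - segment \<sigma> I \<inter> blocks_before \<gamma>) \<union> {k}" using dk Bc by blast
  qed
qed

lemma ofilter_segment_under:
  assumes kx: "k \<in> fld x" and I: "ofilter (fst x) I"
  shows "ofilter (fst (restr x (block (idx k)))) (segment (idx k) (I \<inter> under (fst x) k))"
proof (rule ofilter_restrI[OF WO_x block_subset])
  show "segment (idx k) (I \<inter> under (fst x) k) \<subseteq> block (idx k)"
  proof
    fix d assume d: "d \<in> segment (idx k) (I \<inter> under (fst x) k)"
    then have dx: "d \<in> fld x" and "(idx k, idx d) \<in> s" "(d,k) \<in> fst x"
      unfolding segment_def blocks_from_def under_def by auto
    then have "idx d = idx k" using idx_mono[OF dx kx] Well_order_antisym[OF wo_s] by blast
    then show "d \<in> block (idx k)" using in_block[OF dx] by simp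
  qed
next
  fix d d' assume d: "d \<in> segment (idx k) (I \<inter> under (fst x) k)" and d': "d' \<in> block (idx k)"
    and dd: "(d',d) \<in> fst x"
  have "d' \<in> I \<inter> under (fst x) k"
    using ofilter_down[OF ofilter_Int[OF I ofilter_under]] d dd unfolding segment_def by blast
  then show "d' \<in> segment (idx k) (I \<inter> under (fst x) k)"
    using d' block_subset_blocks_from idx_offset_in(1)[OF kx] unfolding segment_def by blast
qed

lemma blocks_around_witness:
  assumes Bc: "B = {d \<in> segment \<sigma> I. (d,k) \<in> fst x \<and> d \<noteq> k}" and kS: "k \<in> segment \<sigma> I"
    and sg: "\<sigma> \<in> Field s" and I: "ofilter (fst x) I" and k\<sigma>: "idx k \<noteq> \<sigma>"
    and sgm: "(\<sigma>,\<gamma>) \<in> s" "\<sigma> \<noteq> \<gamma>" and gk: "(\<gamma>, idx k) \<in> s"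
  shows "block \<sigma> \<subseteq> segment \<sigma> I \<inter> blocks_before \<gamma>"
    and "segment \<sigma> I \<inter> blocks_before \<gamma> \<subseteq> B"
    and "\<gamma> \<noteq> idx k \<Longrightarrow> block \<gamma> \<subseteq> B \<inter> segment \<gamma> I"
proof -
  have kx: "k \<in> fld x" and kI: "k \<in> I" and sk: "(\<sigma>, idx k) \<in> s"
    using kS segment_subset unfolding segment_def blocks_from_def by auto
  have below_k: "(d,k) \<in> fst x \<and> d \<noteq> k \<and> d \<in> I" if "d \<in> fld x" "(idx d, idx k) \<in> s" "idx d \<noteq> idx k" for d
    using rel_if_idx_less[OF that(1) kx that(2,3)] ofilter_down[OF I kI] by blast
  show "block \<sigma> \<subseteq> segment \<sigma> I \<inter> blocks_before \<gamma>"
  proof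
    fix d assume d: "d \<in> block \<sigma>"
    then have "d \<in> I" using below_k[OF block_in_fld[OF d]] idx_block[OF d] sk k\<sigma> by auto
    then show "d \<in> segment \<sigma> I \<inter> blocks_before \<gamma>"
      using d block_subset_blocks_from[OF sg] sgm unfolding segment_def blocks_before_def block_def by auto
  qed
  show "segment \<sigma> I \<inter> blocks_before \<gamma> \<subseteq> B"
  proof
    fix d assume d: "d \<in> segment \<sigma> I \<inter> blocks_before \<gamma>"
    then have dx: "d \<in> fld x" and dg: "(idx d, \<gamma>) \<in> s" "idx d \<noteq> \<gamma>"
      unfolding blocks_before_def by auto
    have "(idx d, idx k) \<in> s" "idx d \<noteq> idx k"
      using Well_order_trans[OF wo_s dg(1) gk] Well_order_antisym[OF wo_s gk] dg by auto
    then show "d \<in> B" using below_k[OF dx] Bc d by blast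
  qed
  show "block \<gamma> \<subseteq> B \<inter> segment \<gamma> I" if gk': "\<gamma> \<noteq> idx k"
  proof
    fix d assume d: "d \<in> block \<gamma>"
    have dx: "d \<in> fld x" using block_in_fld[OF d] .
    have dk: "(d,k) \<in> fst x \<and> d \<noteq> k \<and> d \<in> I" using below_k[OF dx] idx_block[OF d] gk gk' by auto
    moreover have "d \<in> blocks_from \<sigma>" "d \<in> blocks_from \<gamma>"
      using in_blocks_from[OF dx] idx_block[OF d] sgm(1) Well_order_refl[OF wo_s] gk by (auto intro: FieldI1)
    ultimately show "d \<in> B \<inter> segment \<gamma> I" using Bc unfolding segment_def by blast
  qed
qed

lemma witness_suffix:
  fixes p :: "(nat,'a) wd"
  assumes bounds: "bounds_segments (u \<sigma>)" and pp: "prime_word p" and sg: "\<sigma> \<in> Field s"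
    and I: "ofilter (fst x) I" and nw: "\<not> weq (u \<sigma>) p"
    and v: "lex_less_at p (restr x (segment \<sigma> I)) B A g k" and k\<sigma>: "idx k \<noteq> \<sigma>"
    and gs: "\<gamma> \<in> Field s" and sgm: "(\<sigma>,\<gamma>) \<in> s" "\<sigma> \<noteq> \<gamma>" and gk: "(\<gamma>, idx k) \<in> s"
  defines "q \<equiv> restr p (fld p - g ` (segment \<sigma> I \<inter> blocks_before \<gamma>))"
  shows "lex_le p q" and "lex_less q (restr x (segment \<gamma> (I \<inter> under (fst x) k)))"
    and "\<gamma> \<noteq> idx k \<Longrightarrow> prefix_of (restr x (block \<gamma>)) q"
proof -
  define S where "S = segment \<sigma> I"
  define P where "P = S \<inter> blocks_before \<gamma>"
  have S: "S \<subseteq> fld x" using segment_subset S_def by simp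
  have wfp: "wf_word p" and wp: "WO p" using pp unfolding prime_word_def wf_word_def by blast+
  have kS: "k \<in> S" and Bc: "B = {d \<in> S. (d,k) \<in> fst x \<and> d \<noteq> k}"
    using lex_less_at_segmentD[OF v] S_def by auto
  note blocks = blocks_around_witness[OF Bc[unfolded S_def] kS[unfolded S_def] sg I k\<sigma> sgm gk]
  have SP: "S - P = segment \<gamma> I" using segment_diff_blocks_before[OF gs sgm(1)] S_def P_def by blast
  have v': "lex_less_at p (restr x S) B A g k" using v S_def by simp
  have Pof: "ofilter (fst (restr x S)) P" using ofilter_restr_blocks_before[OF S] P_def by simp
  have PB: "P \<subseteq> B" using blocks(2) P_def S_def by simp
  have \<sigma>P: "block \<sigma> \<subseteq> P" using blocks(1) P_def S_def by simp
  have gP: "ofilter (fst p) (g ` P)" using lex_less_at_shift(1)[OF wp WO_restr_x v' Pof PB] .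
  have isoP: "word_iso (restr x P) (restr p (g ` P)) g"
    using lex_less_at_shift(2)[OF wp WO_restr_x v' Pof PB] by (simp add: restr_restr_subset P_def)
  have v2: "lex_less_at q (restr x (segment \<gamma> I)) (B - P) (A - g ` P) g k"
    using lex_less_at_shift(3)[OF wp WO_restr_x v' Pof PB] restr_restr_diff[OF WO_x S] SP
    unfolding q_def S_def P_def by simp
  have wq: "WO q" using WO_restr[OF wp] q_def by simp
  have "fld p - g ` P \<noteq> {}"
  proof
    assume "fld p - g ` P = {}"
    then have "g ` P = fld p" using ofilter_sub[OF gP] by blast
    then have "word_iso (restr x P) p g" using isoP by simp
    moreover have Pseg: "P = segment \<sigma> (I \<inter> blocks_before \<gamma>)" unfolding P_def S_def segment_def by blast
    ultimately have e: "weq p (restr x (segment \<sigma> (I \<inter> blocks_before \<gamma>)))"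
      using weq_iff_word_iso weq_sym by metis
    have "segment \<sigma> (I \<inter> blocks_before \<gamma>) = block \<sigma>"
      using segment_eq_block_step[OF bounds pp sg ofilter_Int[OF I ofilter_blocks_before] _ e] \<sigma>P Pseg by simp
    then show False using e weq_block[OF sg] weq_sym weq_trans nw by metis
  qed
  moreover have "g ` P \<noteq> {}" using \<sigma>P block_nonempty[OF sg] by blast
  ultimately show "lex_le p q" using prime_le_suffix[OF pp wfp weq_refl gP] q_def P_def S_def by simp
  have "(B - P) \<union> {k} = segment \<gamma> (I \<inter> under (fst x) k)"
    using segment_after_witness[OF Bc[unfolded S_def] kS[unfolded S_def] gs sgm(1) gk] unfolding P_def S_def .
  moreover have "(B - P) \<union> {k} \<subseteq> segment \<gamma> I" using Bc kS PB SP by blast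
  ultimately show "lex_less q (restr x (segment \<gamma> (I \<inter> under (fst x) k)))"
    using lex_less_at_imp_lex_less[OF wq WO_restr_x v2] restr_restr_subset by metis
  show "prefix_of (restr x (block \<gamma>)) q" if "\<gamma> \<noteq> idx k"
  proof -
    have \<gamma>B: "block \<gamma> \<subseteq> B - P" and \<gamma>seg: "block \<gamma> \<subseteq> segment \<gamma> I"
      using blocks(3)[OF that] idx_block unfolding P_def blocks_before_def by auto
    note \<gamma>of = block_ofilter_segment[OF \<gamma>seg]
    show ?thesis
      using prefix_ofI[OF lex_less_at_shift(1)[OF wq WO_restr_x v2 \<gamma>of \<gamma>B]]
        lex_less_at_shift(2)[OF wq WO_restr_x v2 \<gamma>of \<gamma>B] restr_restr_subset[OF \<gamma>seg] weq_iff_word_iso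
      by metis
  qed
qed

lemma segment_le_prime_step:
  fixes p :: "(nat,'a) wd"
  assumes bounds: "bounds_segments (u \<sigma>)" and pp: "prime_word p" and sg: "\<sigma> \<in> Field s"
    and pre: "prefix_of (u \<sigma>) p" and nw: "\<not> weq (u \<sigma>) p" and I: "ofilter (fst x) I"
  shows "lex_le (restr x (segment \<sigma> I)) p"
proof (rule ccontr)
  assume "\<not> lex_le (restr x (segment \<sigma> I)) p"
  have wp: "WO p" using pp unfolding prime_word_def wf_word_def by blast
  have wu: "WO (u \<sigma>)" using WO_u[OF sg] .
  have sp: "lex_less (u \<sigma>) p" using prefix_of_imp_lex_le[OF pre] nw unfolding lex_less_def by blast
  obtain B A g k where v: "lex_less_at p (restr x (segment \<sigma> I)) B A g k"
    using lex_less_imp_lex_less_at[OF wp WO_restr_x] not_lex_le_imp_less[OF WO_restr_x wp]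
      \<open>\<not> lex_le (restr x (segment \<sigma> I)) p\<close> by blast
  have kS: "k \<in> segment \<sigma> I" using lex_less_at_segmentD(1)[OF v] .
  have kx: "k \<in> fld x" using kS segment_subset by blast
  define \<eta> where "\<eta> = idx k"
  have \<eta>: "\<eta> \<in> Field s" "(\<sigma>,\<eta>) \<in> s" "\<sigma> \<noteq> \<eta>" "(\<eta>, idx k) \<in> s"
    using idx_offset_in(1)[OF kx] kS witness_beyond_first_block[OF sg I pre wp v] Well_order_refl[OF wo_s]
    unfolding \<eta>_def segment_def blocks_from_def by auto
  let ?I = "I \<inter> under (fst x) k"
  let ?q = "\<lambda>\<gamma>. restr p (fld p - g ` (segment \<sigma> I \<inter> blocks_before \<gamma>))"
  have I': "ofilter (fst x) ?I" using ofilter_Int[OF I ofilter_under] .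
  have wq: "WO (?q \<gamma>)" for \<gamma> using WO_restr[OF wp] .
  note suffix = witness_suffix[OF bounds pp sg I nw v \<eta>(3)[symmetric, unfolded \<eta>_def]]
  have "lex_less (?q \<eta>) (restr x (segment \<eta> ?I))" using suffix(2)[OF \<eta>] .
  moreover have "lex_le (restr x (segment \<eta> ?I)) (u \<eta>)"
    using lex_le_block_of_ofilter[OF \<eta>(1)] ofilter_segment_under[OF kx I] unfolding \<eta>_def by blast
  ultimately have q\<eta>: "lex_le (?q \<eta>) (u \<eta>)"
    using lex_less_le_trans[OF wq WO_restr_x WO_u[OF \<eta>(1)]] unfolding lex_less_def by blast
  show False
  proof (cases "\<exists>\<gamma> \<in> Field s. (\<sigma>,\<gamma>) \<in> s \<and> (\<gamma>,\<eta>) \<in> s \<and> \<not> weq (u \<gamma>) (u \<sigma>)")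
    case True
    then obtain \<gamma> where \<gamma>: "\<gamma> \<in> Field s" "(\<sigma>,\<gamma>) \<in> s" "(\<gamma>,\<eta>) \<in> s" "\<not> weq (u \<gamma>) (u \<sigma>)" by blast
    obtain \<delta> where \<delta>: "\<delta> \<in> Field s" "(\<sigma>,\<delta>) \<in> s" "(\<delta>,\<gamma>) \<in> s" "\<delta> \<noteq> \<sigma>" "lex_less (u \<delta>) (u \<sigma>)"
      using first_change[OF sg \<gamma>(1,2,4)] by blast
    have \<delta>': "\<delta> \<in> Field s" "(\<sigma>,\<delta>) \<in> s" "\<sigma> \<noteq> \<delta>" "(\<delta>, idx k) \<in> s"
      using \<delta> Well_order_trans[OF wo_s \<delta>(3) \<gamma>(3)] \<eta>_def by auto
    have "prefix_of (restr x (block \<delta>)) (?q \<delta>) \<or> lex_le (?q \<delta>) (u \<delta>)"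
    proof (cases "\<delta> = \<eta>")
      case True
      then show ?thesis using q\<eta> by simp
    next
      case False
      then show ?thesis using suffix(3)[OF \<delta>'] \<eta>_def by blast
    qed
    moreover have "lex_le (?q \<delta>) (restr x (segment \<delta> ?I))"
      using suffix(2)[OF \<delta>'] unfolding lex_less_def by blast
    ultimately show False
      using suffix_below_later_factor[OF bounds sg pre nw wp \<delta>(1) \<delta>(5) I' wq suffix(1)[OF \<delta>']] by blast
  next
    case False
    then have "weq (u \<eta>) (u \<sigma>)" using \<eta> Well_order_refl[OF wo_s \<eta>(1)] by blast
    then have "lex_le (?q \<eta>) (u \<sigma>)"
      using lex_le_trans[OF wq WO_u[OF \<eta>(1)] wu q\<eta>] weq_imp_lex_le[OF _ wu] by blast
    then have "lex_less (?q \<eta>) p" using lex_le_less_trans[OF wq wu wp _ sp] by blast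
    then show False using lex_less_not_le[OF wq wp] suffix(1)[OF \<eta>] by blast
  qed
qed

lemma bounds_segments_prime: "prime_word p \<Longrightarrow> bounds_segments p"
proof (induction p rule: wf_induct_rule[OF wf_inv_image[OF wf_ordLess, of fst]])
  case (1 p)
  have wp: "WO p" using "1.prems" unfolding prime_word_def wf_word_def by blast
  show ?case unfolding bounds_segments_def
  proof (intro allI impI)
    fix \<sigma> I assume sg: "\<sigma> \<in> Field s" and pre: "prefix_of (u \<sigma>) p" and nw: "\<not> weq (u \<sigma>) p"
      and I: "ofilter (fst x) I"
    have "(fst (u \<sigma>), fst p) \<in> ordLess" using prefix_of_ordLess[OF WO_u[OF sg] wp pre nw] .
    then have "bounds_segments (u \<sigma>)" using "1.IH" prime_u[OF sg] by simp
    then show "lex_le (restr x (segment \<sigma> I)) p" using segment_le_prime_step "1.prems" sg pre nw I by blast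
  qed
qed

lemma prime_segment_eq_block:
  fixes p :: "(nat,'a) wd"
  assumes "prime_word p" "\<sigma> \<in> Field s" "ofilter (fst x) I" "block \<sigma> \<subseteq> segment \<sigma> I"
    "weq p (restr x (segment \<sigma> I))"
  shows "segment \<sigma> I = block \<sigma>"
  using segment_eq_block_step[OF bounds_segments_prime[OF prime_u[OF assms(2)]] assms] .

lemma block_has_start: assumes "b \<in> Field s" shows "\<exists>c \<in> block b. block_start c"
proof -
  obtain c where "c \<in> block b" "\<forall>d\<in>block b. (c,d) \<in> fst x"
    using Well_order_least[OF WO_x block_subset block_nonempty[OF assms]] by blast
  then show ?thesis using idx_block unfolding block_start_def by metis
qed

lemma blocks_from_eq_above:
  assumes c: "c \<in> block b" and st: "block_start c"
  shows "blocks_from b = above (fst x) c"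
proof
  have cx: "c \<in> fld x" using block_in_fld[OF c] .
  have least: "\<forall>d\<in>block b. (c,d) \<in> fst x" using st idx_block[OF c] unfolding block_start_def by simp
  show "blocks_from b \<subseteq> above (fst x) c"
  proof
    fix d assume "d \<in> blocks_from b"
    then have dx: "d \<in> fld x" and bd: "(b, idx d) \<in> s" unfolding blocks_from_def by auto
    show "d \<in> above (fst x) c"
    proof (cases "idx d = b")
      case True
      then show ?thesis using least in_block[OF dx] unfolding above_def by auto
    next
      case False
      then show ?thesis using rel_if_idx_less(1)[OF cx dx] idx_block[OF c] bd unfolding above_def by simp
    qed
  qed
  show "above (fst x) c \<subseteq> blocks_from b"
  proof
    fix d assume "d \<in> above (fst x) c"
    then have cd: "(c,d) \<in> fst x" unfolding above_def by simp
    then have "d \<in> fld x" by (simp add: FieldI2)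
    then show "d \<in> blocks_from b" using idx_mono[OF cx _ cd] idx_block[OF c] unfolding blocks_from_def by simp
  qed
qed

lemma block_eq_above_Int:
  assumes c: "c \<in> block b" and st: "block_start c"
  shows "block b = above (fst x) c \<inter> blocks_upto b"
proof -
  have "b \<in> Field s" using idx_offset_in(1)[OF block_in_fld[OF c]] idx_block[OF c] by simp
  then show ?thesis
    using blocks_from_eq_above[OF c st] Well_order_refl[OF wo_s] Well_order_antisym[OF wo_s]
    unfolding block_def blocks_from_def blocks_upto_def by blast
qed

lemma block_inj: "b \<in> Field s \<Longrightarrow> block b = block b' \<Longrightarrow> b = b'"
  using block_nonempty idx_block by blast

lemma rel_iff_blocks:
  assumes "d \<in> block b" "e \<in> block c" "b \<noteq> c"
  shows "(b,c) \<in> s \<longleftrightarrow> (d,e) \<in> fst x"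
  using rel_iff_idx_rel[OF block_in_fld[OF assms(1)] block_in_fld[OF assms(2)]] assms idx_block by metis

end

locale two_factorizations = A: factorization x s u phi + B: factorization x s' u' phi'
  for x :: "(nat,'a::linorder) wd" and s u phi s' u' phi'
begin

text \<open>The context is closed and re-entered after each group of lemmas so that their
  \<open>swapped\<close> instances become available to the next group.\<close>
sublocale swapped: two_factorizations x s' u' phi' s u phi
  by unfold_locales

lemma block_eq_if_blocks_upto_subset:
  assumes b: "b \<in> Field s" "b' \<in> Field s'" and c: "c \<in> A.block b" "c \<in> B.block b'"
    and st: "A.block_start c" "B.block_start c" and sub: "A.blocks_upto b \<subseteq> B.blocks_upto b'"
  shows "A.block b = B.block b'"
proof -
  have seg: "A.segment b (B.blocks_upto b') = B.block b'"
    using A.blocks_from_eq_above[OF c(1) st(1)] B.block_eq_above_Int[OF c(2) st(2)]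
    unfolding A.segment_def by blast
  have "A.block b \<subseteq> A.segment b (B.blocks_upto b')"
    using A.block_eq_above_Int[OF c(1) st(1)] B.block_eq_above_Int[OF c(2) st(2)] sub seg by blast
  then have "A.segment b (B.blocks_upto b') = A.block b"
    using A.prime_segment_eq_block[OF B.prime_u[OF b(2)] b(1) B.ofilter_blocks_upto[of b']]
      seg weq_sym[OF B.weq_block[OF b(2)]] by simp
  then show ?thesis using seg by simp
qed

end

context two_factorizations
begin

lemma block_eq:
  assumes b: "b \<in> Field s" "b' \<in> Field s'" and c: "c \<in> A.block b" "c \<in> B.block b'"
    and st: "A.block_start c" "B.block_start c"
  shows "A.block b = B.block b'"
  using ofilter_linear[OF A.WO_x A.ofilter_blocks_upto B.ofilter_blocks_upto]
    block_eq_if_blocks_upto_subset[OF assms] swapped.block_eq_if_blocks_upto_subset[OF b(2,1) c(2,1) st(2,1)]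
  by metis

lemma block_start_transfer:
  assumes cx: "c \<in> fld x" and st: "A.block_start c"
    and IH: "\<And>c'. c' \<in> fld x \<Longrightarrow> (c',c) \<in> fst x \<Longrightarrow> c' \<noteq> c \<Longrightarrow> A.block_start c' \<longleftrightarrow> B.block_start c'"
  shows "B.block_start c"
proof (rule ccontr)
  assume n: "\<not> B.block_start c"
  obtain c' where c': "c' \<in> B.block (B.idx c)" "B.block_start c'"
    using B.block_has_start[OF B.idx_offset_in(1)[OF cx]] by blast
  have c'x: "c' \<in> fld x" using B.block_in_fld[OF c'(1)] .
  have c'c: "(c',c) \<in> fst x" using c' B.in_block[OF cx] B.idx_block[OF c'(1)] unfolding B.block_start_def by metis
  have ne: "c' \<noteq> c" using n c'(2) by blast
  have "A.block (A.idx c') = B.block (B.idx c)"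
    using block_eq[OF A.idx_offset_in(1)[OF c'x] B.idx_offset_in(1)[OF cx] A.in_block[OF c'x] c'(1)]
      IH[OF c'x c'c ne] c'(2) by blast
  then have "c' \<in> A.block (A.idx c)" using B.in_block[OF cx] A.idx_block A.in_block[OF c'x] by metis
  then have "(c,c') \<in> fst x" using st unfolding A.block_start_def by blast
  then show False using Well_order_antisym[OF A.WO_x c'c] ne by blast
qed

end

context two_factorizations
begin

lemma block_start_iff: "c \<in> fld x \<Longrightarrow> A.block_start c \<longleftrightarrow> B.block_start c"
proof (induction c rule: wo_rel.well_order_induct[of "fst x"])
  case 1
  show ?case using A.WO_x by (simp add: wo_rel_def)
next
  case (2 c)
  then have IH: "\<And>c'. c' \<in> fld x \<Longrightarrow> (c',c) \<in> fst x \<Longrightarrow> c' \<noteq> c \<Longrightarrow> A.block_start c' \<longleftrightarrow> B.block_start c'"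
    by blast
  show ?case using block_start_transfer[OF "2.prems" _ IH] swapped.block_start_transfer[OF "2.prems" _ IH[symmetric]]
    by blast
qed

lemma block_match: assumes b: "b \<in> Field s" shows "\<exists>b' \<in> Field s'. A.block b = B.block b'"
proof -
  obtain c where c: "c \<in> A.block b" "A.block_start c" using A.block_has_start[OF b] by blast
  have cx: "c \<in> fld x" using A.block_in_fld[OF c(1)] .
  show ?thesis
    using block_eq[OF b B.idx_offset_in(1)[OF cx] c(1) B.in_block[OF cx] c(2)] block_start_iff[OF cx] c(2)
      B.idx_offset_in(1)[OF cx] by blast
qed

end

context two_factorizations
begin

lemma factors_iso:
  "\<exists>h. bij_betw h (Field s) (Field s') \<and> (\<forall>b\<in>Field s. \<forall>c\<in>Field s. (b, c) \<in> s \<longleftrightarrow> (h b, h c) \<in> s')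
     \<and> (\<forall>b\<in>Field s. weq (u b) (u' (h b)))"
proof -
  define h where "h b = (SOME b'. b' \<in> Field s' \<and> A.block b = B.block b')" for b
  have hb: "h b \<in> Field s' \<and> A.block b = B.block (h b)" if "b \<in> Field s" for b
    unfolding h_def using someI_ex block_match[OF that] by (metis (mono_tags, lifting))
  have inj: "inj_on h (Field s)" using hb A.block_inj by (metis inj_onI)
  have "Field s' \<subseteq> h ` Field s"
  proof
    fix b' assume b': "b' \<in> Field s'"
    then obtain b where b: "b \<in> Field s" "B.block b' = A.block b" using swapped.block_match by blast
    then have "h b = b'" using hb[OF b(1)] B.block_inj b' by metis
    then show "b' \<in> h ` Field s" using b(1) by blast
  qed
  then have bij: "bij_betw h (Field s) (Field s')" using inj hb unfolding bij_betw_def by blast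
  have "(b, c) \<in> s \<longleftrightarrow> (h b, h c) \<in> s'" if b: "b \<in> Field s" and c: "c \<in> Field s" for b c
  proof (cases "b = c")
    case True
    then show ?thesis using Well_order_refl[OF A.wo_s b] Well_order_refl[OF B.wo_s] hb[OF b] by simp
  next
    case False
    obtain d e where d: "d \<in> A.block b" and e: "e \<in> A.block c" using A.block_nonempty b c by blast
    have "h b \<noteq> h c" using inj b c False unfolding inj_on_def by blast
    then show ?thesis using A.rel_iff_blocks[OF d e False] B.rel_iff_blocks hb[OF b] hb[OF c] d e by blast
  qed
  moreover have "weq (u b) (u' (h b))" if b: "b \<in> Field s" for b
    using weq_trans[OF weq_sym[OF A.weq_block[OF b]]] B.weq_block hb[OF b] by metis
  ultimately show ?thesis using bij by blast
qed

end

theorem mainTheorem18: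
  fixes x :: "(nat, 'a::{finite,linorder}) wd"
    and s s' :: "nat rel" and u u' :: "nat \<Rightarrow> (nat, 'a) wd"
  assumes "wf_word x"
    and "Well_order s" and "\<forall>b\<in>Field s. prime_word (u b)"
    and "dense_nonincr s u" and "weq x (wprod s u)"
    and "Well_order s'" and "\<forall>b\<in>Field s'. prime_word (u' b)"
    and "dense_nonincr s' u'" and "weq x (wprod s' u')"
  shows "\<exists>h. bij_betw h (Field s) (Field s')
           \<and> (\<forall>b\<in>Field s. \<forall>c\<in>Field s. (b, c) \<in> s \<longleftrightarrow> (h b, h c) \<in> s')
           \<and> (\<forall>b\<in>Field s. weq (u b) (u' (h b)))"
proof -
  obtain phi where phi: "word_iso x (wprod s u) phi" using assms(5) weq_iff_word_iso by blast
  obtain phi' where phi': "word_iso x (wprod s' u') phi'" using assms(9) weq_iff_word_iso by blast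
  interpret two_factorizations x s u phi s' u' phi'
    by unfold_locales (use assms phi phi' in auto)
  show ?thesis by (rule factors_iso)
qed

end
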